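(* Let $n\ge3$, let $\Omega\subset\mathbb{R}^n$ be a bounded domain with smooth boundary and let $u$ solve $\Delta u=-n$ in $\Omega$, $u=0$ on $\partial\Omega$. Then $$\max_{\partial\Omega}\frac{|\nabla u|}{\sqrt{2u_{\max}}}\ge1,$$ and equality holds if and only if $(\Omega,u)$ is equivalent to the Serrin solution $\Omega_0=B_1(0)$, $u_0(x)=\frac{1-|x|^2}{2}$.
   Context: $u_{\max}=\max_\Omega u$. $(\bar\Omega,\bar u)$ is equivalent to $(\Omega,u)$ if $\bar\Omega=\{\lambda x+c:x\in\Omega\}$ and $\bar u(y)=\lambda^2u((y-c)/\lambda)$ for some $\lambda>0$, $c\in\mathbb{R}^n$. *)

theory Defs
  imports "HOL-Analysis.Analysis"
begin

primrec C_k :: "nat \<Rightarrow> (real^'n) set \<Rightarrow> (real^'n \<Rightarrow> real) \<Rightarrow> bool" where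
  "C_k 0 U f = continuous_on U f"
| "C_k (Suc k) U f =
     ((\<forall>x\<in>U. f differentiable (at x)) \<and>
      (\<forall>i. C_k k U (\<lambda>x. frechet_derivative f (at x) (axis i 1))))"

definition C_infinity :: "(real^'n) set \<Rightarrow> (real^'n \<Rightarrow> real) \<Rightarrow> bool" where
  "C_infinity U f \<longleftrightarrow> (\<forall>k. C_k k U f)"

definition smooth_boundary :: "(real^'n) set \<Rightarrow> bool" where
  "smooth_boundary \<Omega> \<longleftrightarrow>
     (\<forall>p\<in>frontier \<Omega>. \<exists>U \<phi>. open U \<and> p \<in> U \<and> C_infinity U \<phi> \<and>
        (\<forall>x\<in>U. frechet_derivative \<phi> (at x) \<noteq> (\<lambda>h. 0)) \<and>
        \<Omega> \<inter> U = {x\<in>U. \<phi> x < 0} \<and> frontier \<Omega> \<inter> U = {x\<in>U. \<phi> x = 0})"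

definition bounded_domain :: "(real^'n) set \<Rightarrow> bool" where
  "bounded_domain \<Omega> \<longleftrightarrow> open \<Omega> \<and> connected \<Omega> \<and> bounded \<Omega> \<and> \<Omega> \<noteq> {}"

definition u0 :: "real^'n \<Rightarrow> real" where
  "u0 x = (1 - (norm x)\<^sup>2) / 2"

definition equivalent_pair ::
  "(real^'n) set \<Rightarrow> (real^'n \<Rightarrow> real) \<Rightarrow> (real^'n) set \<Rightarrow> (real^'n \<Rightarrow> real) \<Rightarrow> bool" where
  "equivalent_pair \<Omega> u \<Omega>' u' \<longleftrightarrow>
     (\<exists>l>0. \<exists>c. \<Omega> = (\<lambda>x. l *\<^sub>R x + c) ` \<Omega>' \<and>
        (\<forall>y\<in>\<Omega>. u y = l\<^sup>2 * u' ((1/l) *\<^sub>R (y - c))))"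

end

theory Submission
  imports Defs
begin

(* P = |Du|^2 + 2u is subharmonic for a solution of Delta u = -n: formally
   Delta P = 2 |D^2 u|^2 - 2n >= 0, because |D^2 u|^2 >= (Delta u)^2 / n = n by Cauchy-Schwarz.
   The maximum principle gives 2 u_max = P(x_max) <= max_{boundary} P = max_{boundary} |Du|^2.
   In case of equality P attains its maximum in the interior, so it is constant by the strong
   maximum principle (Hopf's barrier argument); then |D^2 u|^2 = n forces D^2 u = -I, so u is
   the paraboloid C - |x - c|^2 / 2 and the domain is the ball on whose boundary it vanishes.

   Since u is only C^2, Delta P is never formed: the maximum principles are proved for the
   difference quotient approximations P_h = sum_j (D_j^h u)^2 + 2u, which are C^2 and whose
   Laplacian 2 sum_{j,k} (D_k D_j^h u)^2 - 2n tends to 2 |D^2 u|^2 - 2n locally uniformly. *)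

lemma DERIV_local_max_second_nonpos:
  fixes g g' :: "real \<Rightarrow> real"
  assumes d: "d > 0"
    and g: "\<And>t. \<bar>t\<bar> < d \<Longrightarrow> (g has_real_derivative g' t) (at t)"
    and g': "(g' has_real_derivative g'') (at 0)"
    and local_max: "\<And>t. \<bar>t\<bar> < d \<Longrightarrow> g t \<le> g 0"
  shows "g'' \<le> 0"
proof (rule ccontr)
  assume "\<not> g'' \<le> 0"
  then have pos: "g'' > 0" by simp
  have g'0: "g' 0 = 0"
    using DERIV_local_max[OF g[of 0] d] local_max d by (simp add: abs_minus_commute)
  obtain d' where d': "d' > 0" "\<And>h. h > 0 \<Longrightarrow> h < d' \<Longrightarrow> g' 0 < g' (0 + h)"
    using DERIV_pos_inc_right[OF g' pos] by blast
  define h where "h = min d d' / 2"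
  have h: "h > 0" "h < d" "h < d'" using d d'(1) by (auto simp: h_def)
  obtain z where z: "z > 0" "z < h" "g h - g 0 = (h - 0) * g' z"
    using MVT2[of 0 h g g'] h g by force
  have "g' z > 0" using d'(2)[of z] z h g'0 by simp
  then have "g h > g 0" using z h by (simp add: algebra_simps)
  moreover have "g h \<le> g 0" using local_max[of h] h by simp
  ultimately show False by simp
qed

lemma DERIV_local_min_second_nonneg:
  fixes g g' :: "real \<Rightarrow> real"
  assumes "d > 0"
    and "\<And>t. \<bar>t\<bar> < d \<Longrightarrow> (g has_real_derivative g' t) (at t)"
    and "(g' has_real_derivative g'') (at 0)"
    and "\<And>t. \<bar>t\<bar> < d \<Longrightarrow> g t \<ge> g 0"
  shows "g'' \<ge> 0"
  using DERIV_local_max_second_nonpos[of d "\<lambda>t. - g t" "\<lambda>t. - g' t" "- g''"] assms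
  by (auto intro!: derivative_intros)

lemma has_field_derivative_along_line:
  fixes f :: "'a::real_normed_vector \<Rightarrow> real"
  assumes "(f has_derivative f') (at (y + t *\<^sub>R v))"
  shows "((\<lambda>s. f (y + s *\<^sub>R v)) has_real_derivative f' v) (at t)"
proof -
  have "((\<lambda>s. y + s *\<^sub>R v) has_derivative (\<lambda>s. s *\<^sub>R v)) (at t)"
    by (auto intro!: derivative_eq_intros)
  from has_derivative_compose[OF this assms]
  have "((\<lambda>s. f (y + s *\<^sub>R v)) has_derivative (\<lambda>s. f' (s *\<^sub>R v))) (at t)" by (simp add: o_def)
  moreover have "(\<lambda>s. f' (s *\<^sub>R v)) = (*) (f' v)"
    using linear_scale[OF has_derivative_linear[OF assms]] by (auto simp: mult.commute)
  ultimately show ?thesis by (simp add: has_field_derivative_def)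
qed

lemma has_derivative_vec_nth:
  fixes F :: "'a::real_normed_vector \<Rightarrow> real^'n"
  assumes "(F has_derivative F') (at x)"
  shows "((\<lambda>y. F y $ k) has_derivative (\<lambda>h. F' h $ k)) (at x)"
  using bounded_linear.has_derivative[OF bounded_linear_vec_nth assms] .

lemma compact_thickening_subset:
  fixes K \<Omega> :: "'a::euclidean_space set"
  assumes K: "compact K" and \<Omega>: "open \<Omega>" and sub: "K \<subseteq> \<Omega>"
  obtains r where "r > 0" "compact {x + y |x y. x \<in> K \<and> y \<in> cball 0 r}"
    "{x + y |x y. x \<in> K \<and> y \<in> cball 0 r} \<subseteq> \<Omega>"
proof -
  have "\<exists>r>0. \<forall>x\<in>K. \<forall>y. dist x y \<le> r \<longrightarrow> y \<in> \<Omega>"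
  proof (cases "K = {} \<or> - \<Omega> = {}")
    case True then show ?thesis by (auto intro: exI[of _ 1])
  next
    case False
    then have Kne: "K \<noteq> {}" and Cne: "- \<Omega> \<noteq> {}" by auto
    have "continuous_on K (\<lambda>x. infdist x (- \<Omega>))" by (intro continuous_intros)
    from continuous_attains_inf[OF K Kne this] obtain x0 where x0: "x0 \<in> K"
      "\<And>y. y \<in> K \<Longrightarrow> infdist x0 (- \<Omega>) \<le> infdist y (- \<Omega>)" by blast
    have pos: "infdist x0 (- \<Omega>) > 0"
      using infdist_pos_not_in_closed[of "- \<Omega>" x0] \<Omega> Cne x0(1) sub by auto
    show ?thesis
    proof (intro exI[of _ "infdist x0 (- \<Omega>) / 2"] conjI ballI allI impI)
      fix x y assume x: "x \<in> K" and d: "dist x y \<le> infdist x0 (- \<Omega>) / 2"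
      show "y \<in> \<Omega>"
      proof (rule ccontr)
        assume "y \<notin> \<Omega>"
        then have "infdist x (- \<Omega>) \<le> dist x y" by (intro infdist_le) auto
        with x0(2)[OF x] d pos show False by linarith
      qed
    qed (use pos in auto)
  qed
  then obtain r where r: "r > 0" "\<And>x y. x \<in> K \<Longrightarrow> dist x y \<le> r \<Longrightarrow> y \<in> \<Omega>" by blast
  show ?thesis
  proof (rule that[OF r(1)])
    show "compact {x + y |x y. x \<in> K \<and> y \<in> cball 0 r}"
      using compact_sums[OF K compact_cball[of 0 r]] by simp
    show "{x + y |x y. x \<in> K \<and> y \<in> cball 0 r} \<subseteq> \<Omega>"
      using r(2) by (force simp: dist_norm)
  qed
qed

lemma difference_quotient_uniform:
  fixes f d :: "'a::euclidean_space \<Rightarrow> real" and f' :: "'a \<Rightarrow> 'a \<Rightarrow> real"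
  assumes K': "compact K'" and r: "r > 0"
    and segment: "\<And>x s. x \<in> K \<Longrightarrow> 0 \<le> s \<Longrightarrow> s \<le> r \<Longrightarrow> x + s *\<^sub>R v \<in> K'"
    and deriv: "\<And>y. y \<in> K' \<Longrightarrow> (f has_derivative f' y) (at y)"
    and dir: "\<And>y. y \<in> K' \<Longrightarrow> f' y v = d y"
    and cont: "continuous_on K' d"
    and e: "e > 0"
  shows "eventually (\<lambda>h. \<forall>x\<in>K. \<bar>(f (x + h *\<^sub>R v) - f x) / h - d x\<bar> \<le> e) (at_right 0)"
proof -
  obtain \<eta> where \<eta>: "\<eta> > 0"
    "\<And>x x'. x \<in> K' \<Longrightarrow> x' \<in> K' \<Longrightarrow> dist x' x < \<eta> \<Longrightarrow> dist (d x') (d x) < e"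
    using compact_uniformly_continuous[OF cont K'] e unfolding uniformly_continuous_on_def by metis
  have "eventually (\<lambda>h. h \<in> {0<..<min r (\<eta> / (norm v + 1))}) (at_right 0)"
    by (rule eventually_at_right_real) (use r \<eta> in \<open>auto simp: add_nonneg_pos\<close>)
  then show ?thesis
  proof (rule eventually_mono, safe)
    fix h x assume h: "h \<in> {0<..<min r (\<eta> / (norm v + 1))}" and x: "x \<in> K"
    have "((\<lambda>s. f (x + s *\<^sub>R v)) has_real_derivative d (x + s *\<^sub>R v)) (at s)"
      if "0 \<le> s" "s \<le> h" for s
      using has_field_derivative_along_line[OF deriv] dir segment[OF x, of s] that h by force
    then obtain z where z: "0 < z" "z < h"
      "f (x + h *\<^sub>R v) - f (x + 0 *\<^sub>R v) = (h - 0) * d (x + z *\<^sub>R v)"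
      using MVT2[of 0 h "\<lambda>s. f (x + s *\<^sub>R v)" "\<lambda>s. d (x + s *\<^sub>R v)"] h by force
    have "norm (z *\<^sub>R v) < \<eta>"
    proof -
      have "norm (z *\<^sub>R v) \<le> h * (norm v + 1)" using z by (simp add: mult_mono)
      also have "\<dots> < \<eta>" using h by (simp add: pos_less_divide_eq add_nonneg_pos)
      finally show ?thesis .
    qed
    then have "dist (d (x + z *\<^sub>R v)) (d x) < e"
      using \<eta>(2) segment[OF x, of 0] segment[OF x, of z] z h r by (auto simp: dist_norm)
    then show "\<bar>(f (x + h *\<^sub>R v) - f x) / h - d x\<bar> \<le> e" using z h by (simp add: dist_real_def)
  qed
qed

lemma sum_squares_diff_le:
  fixes a b :: "'i \<Rightarrow> real"
  assumes "\<And>i. i \<in> I \<Longrightarrow> \<bar>a i - b i\<bar> \<le> \<eta>" "\<And>i. i \<in> I \<Longrightarrow> \<bar>b i\<bar> \<le> B" "\<eta> \<le> 1"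
  shows "\<bar>(\<Sum>i\<in>I. (a i)\<^sup>2) - (\<Sum>i\<in>I. (b i)\<^sup>2)\<bar> \<le> real (card I) * (\<eta> * (1 + 2 * B))"
proof -
  have "\<bar>(\<Sum>i\<in>I. (a i)\<^sup>2) - (\<Sum>i\<in>I. (b i)\<^sup>2)\<bar> \<le> (\<Sum>i\<in>I. \<bar>(a i)\<^sup>2 - (b i)\<^sup>2\<bar>)"
    by (simp add: sum_subtractf[symmetric] sum_abs)
  also have "\<dots> \<le> (\<Sum>i\<in>I. \<eta> * (1 + 2 * B))"
  proof (rule sum_mono)
    fix i assume i: "i \<in> I"
    have "\<bar>(a i)\<^sup>2 - (b i)\<^sup>2\<bar> = \<bar>a i - b i\<bar> * \<bar>(a i - b i) + 2 * b i\<bar>"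
      by (simp add: power2_eq_square abs_mult[symmetric] algebra_simps)
    also have "\<dots> \<le> \<eta> * (1 + 2 * B)"
      using assms(1,2)[OF i] assms(3) by (intro mult_mono) auto
    finally show "\<bar>(a i)\<^sup>2 - (b i)\<^sup>2\<bar> \<le> \<eta> * (1 + 2 * B)" .
  qed
  finally show ?thesis by simp
qed

lemma eventually_sum_squares_uniform:
  fixes a :: "'h \<Rightarrow> 'i \<Rightarrow> 'x::topological_space \<Rightarrow> real" and b :: "'i \<Rightarrow> 'x \<Rightarrow> real"
  assumes I: "finite I" and K: "compact K" and cont: "\<forall>i\<in>I. continuous_on K (b i)"
    and conv: "\<forall>i\<in>I. \<forall>\<eta>>0. eventually (\<lambda>h. \<forall>x\<in>K. \<bar>a h i x - b i x\<bar> \<le> \<eta>) F"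
    and \<epsilon>: "\<epsilon> > 0"
  shows "eventually (\<lambda>h. \<forall>x\<in>K. \<bar>(\<Sum>i\<in>I. (a h i x)\<^sup>2) - (\<Sum>i\<in>I. (b i x)\<^sup>2)\<bar> \<le> \<epsilon>) F"
proof -
  have "bounded (\<Union>i\<in>I. b i ` K)"
    using I cont K by (auto intro!: bounded_UN compact_imp_bounded compact_continuous_image)
  then obtain B where B: "\<And>i x. i \<in> I \<Longrightarrow> x \<in> K \<Longrightarrow> \<bar>b i x\<bar> \<le> B"
    unfolding bounded_iff by fastforce
  define D where "D = (real (card I) + 1) * (1 + 2 * \<bar>B\<bar>)"
  have D: "D > 0" by (simp add: D_def add_nonneg_pos)
  define \<eta> where "\<eta> = min 1 (\<epsilon> / D)"
  have \<eta>: "\<eta> > 0" "\<eta> \<le> 1" using \<epsilon> D by (auto simp: \<eta>_def)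
  have "\<eta> * D \<le> \<epsilon>"
    using pos_le_divide_eq[OF D, of \<eta> \<epsilon>] by (simp add: \<eta>_def)
  moreover have "real (card I) * (\<eta> * (1 + 2 * \<bar>B\<bar>)) \<le> \<eta> * D"
    using \<eta> by (simp add: D_def algebra_simps)
  ultimately have bound: "real (card I) * (\<eta> * (1 + 2 * \<bar>B\<bar>)) \<le> \<epsilon>" by linarith
  have "eventually (\<lambda>h. \<forall>i\<in>I. \<forall>x\<in>K. \<bar>a h i x - b i x\<bar> \<le> \<eta>) F"
    using conv \<eta> I by (simp add: eventually_ball_finite)
  then show ?thesis
  proof (rule eventually_mono, intro ballI)
    fix h x assume close: "\<forall>i\<in>I. \<forall>x\<in>K. \<bar>a h i x - b i x\<bar> \<le> \<eta>" and x: "x \<in> K"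
    have "\<bar>(\<Sum>i\<in>I. (a h i x)\<^sup>2) - (\<Sum>i\<in>I. (b i x)\<^sup>2)\<bar> \<le> real (card I) * (\<eta> * (1 + 2 * \<bar>B\<bar>))"
      using close x B \<eta> by (intro sum_squares_diff_le) (auto intro: order_trans[OF _ abs_ge_self])
    with bound show "\<bar>(\<Sum>i\<in>I. (a h i x)\<^sup>2) - (\<Sum>i\<in>I. (b i x)\<^sup>2)\<bar> \<le> \<epsilon>" by linarith
  qed
qed

definition diff_quot :: "real \<Rightarrow> 'n \<Rightarrow> (real^'n \<Rightarrow> real) \<Rightarrow> real^'n \<Rightarrow> real" where
  "diff_quot h j f x = (f (x + h *\<^sub>R axis j 1) - f x) / h"

lemma has_field_derivative_diff_quot_along_line:
  assumes "((\<lambda>s. f (x + s *\<^sub>R v)) has_real_derivative g (x + t *\<^sub>R v)) (at t)"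
    and "((\<lambda>s. f (x + h *\<^sub>R axis j 1 + s *\<^sub>R v)) has_real_derivative g (x + h *\<^sub>R axis j 1 + t *\<^sub>R v)) (at t)"
  shows "((\<lambda>s. diff_quot h j f (x + s *\<^sub>R v)) has_real_derivative diff_quot h j g (x + t *\<^sub>R v)) (at t)"
  using DERIV_cdivide[OF DERIV_diff[OF assms(2,1)], of h]
  by (simp add: diff_quot_def algebra_simps)

lemma trace_rank_one_plus_scalar:
  fixes w :: "real^'n"
  shows "(\<Sum>k\<in>UNIV. ((a * (w \<bullet> axis k 1)) *\<^sub>R w + b *\<^sub>R axis k 1) $ k) = a * (w \<bullet> w) + b * real CARD('n)"
proof -
  have "(\<Sum>k\<in>UNIV. ((a * (w \<bullet> axis k 1)) *\<^sub>R w + b *\<^sub>R axis k 1) $ k) = (\<Sum>k\<in>UNIV. a * (w $ k * w $ k) + b)"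
    by (simp add: inner_axis mult.assoc)
  also have "\<dots> = a * (w \<bullet> w) + b * real CARD('n)"
    by (simp add: sum.distrib sum_distrib_left inner_vec_def)
  finally show ?thesis .
qed

section \<open>Balls, barriers and the model solution\<close>

lemma ball_eq_if_frontier_subset_sphere:
  fixes \<Omega> :: "'a::euclidean_space set"
  assumes \<Omega>: "open \<Omega>" "bounded \<Omega>" "\<Omega> \<noteq> {}" and frontier: "frontier \<Omega> \<subseteq> sphere c R"
  shows "\<Omega> = ball c R"
proof
  have not_frontier: "x \<notin> frontier \<Omega>" if "x \<in> \<Omega>" for x
    using that \<Omega>(1) by (simp add: frontier_def interior_open)
  show "\<Omega> \<subseteq> ball c R"
  proof
    fix x assume x: "x \<in> \<Omega>"
    show "x \<in> ball c R"
    proof (rule ccontr)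
      assume "x \<notin> ball c R"
      then have far: "R \<le> dist c x" by simp
      show False
      proof (cases "x = c")
        case True
        obtain z where "z \<in> frontier \<Omega>"
          using frontier_not_empty[OF \<Omega>(3)] \<Omega>(2) not_bounded_UNIV by blast
        then show False using frontier far True x not_frontier by force
      next
        case False
        define v where "v = x - c"
        obtain b where b: "\<And>y. y \<in> \<Omega> \<Longrightarrow> norm y \<le> b" using \<Omega>(2) bounded_iff by blast
        define T where "T = (b + norm x + 1) / norm v"
        have "v \<noteq> 0" "0 \<le> b" using False order_trans[OF norm_ge_zero b[OF x]] by (auto simp: v_def)
        then have "T \<ge> 0" "norm (T *\<^sub>R v) = b + norm x + 1" by (simp_all add: T_def)
        then have "x + T *\<^sub>R v \<notin> \<Omega>"
          using b[of "x + T *\<^sub>R v"] norm_triangle_ineq[of "x + T *\<^sub>R v" "- x"] by auto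
        moreover have "connected ((\<lambda>t. x + t *\<^sub>R v) ` {0..T})"
          by (rule connected_continuous_image) (auto intro!: continuous_intros)
        ultimately obtain y where y: "y \<in> (\<lambda>t. x + t *\<^sub>R v) ` {0..T}" "y \<in> frontier \<Omega>"
          using connected_Int_frontier[of "(\<lambda>t. x + t *\<^sub>R v) ` {0..T}" \<Omega>] x \<open>T \<ge> 0\<close> by force
        then obtain t where t: "t \<ge> 0" "y = x + t *\<^sub>R v" by auto
        have "dist c y = R" using y(2) frontier by auto
        have "t \<noteq> 0" using x not_frontier y(2) t(2) by auto
        have "y - c = (1 + t) *\<^sub>R v" by (simp add: t(2) v_def algebra_simps)
        then have "norm (y - c) = (1 + t) * norm (x - c)"
          using t(1) by (simp add: v_def)
        then have "dist c y = (1 + t) * dist c x"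
          by (simp add: dist_norm norm_minus_commute)
        moreover have "t * dist c x > 0" using False t(1) \<open>t \<noteq> 0\<close> by simp
        ultimately show False using far t(1) \<open>t \<noteq> 0\<close> \<open>dist c y = R\<close> by (simp add: algebra_simps)
      qed
    qed
  qed
  then show "ball c R \<subseteq> \<Omega>"
    using connected_Int_frontier[OF connected_ball, of c R \<Omega>] \<Omega>(3) frontier by force
qed

lemma affine_image_unit_ball:
  fixes c :: "'a::real_normed_vector"
  assumes "R > 0"
  shows "(\<lambda>x. R *\<^sub>R x + c) ` ball 0 1 = ball c R"
proof -
  have "(\<lambda>x. R *\<^sub>R x + c) ` ball 0 1 = (+) c ` ((\<lambda>x. R *\<^sub>R x) ` ball 0 1)"
    by (simp add: image_image add.commute)
  also have "\<dots> = ball c R" using assms by (simp add: ball_scale)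
  finally show ?thesis .
qed

definition hopf_barrier :: "real \<Rightarrow> real \<Rightarrow> 'a::real_inner \<Rightarrow> 'a \<Rightarrow> real" where
  "hopf_barrier \<alpha> R z y = exp (- \<alpha> * ((y - z) \<bullet> (y - z))) - exp (- \<alpha> * R\<^sup>2)"

lemma hopf_barrier_has_derivative:
  "(hopf_barrier \<alpha> R z has_derivative (\<lambda>v. - 2 * \<alpha> * exp (- \<alpha> * ((x - z) \<bullet> (x - z))) * ((x - z) \<bullet> v))) (at x)"
  unfolding hopf_barrier_def[abs_def]
  by (auto intro!: derivative_eq_intros simp: algebra_simps inner_commute)

(* exp (- a s) * (4 a^2 s - 2 a N) is the Laplacian of exp (- a |y|^2) on R^N at |y|^2 = s;
   this choice of a makes it positive on the annulus R/2 <= |y| <= R. *)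
lemma gaussian_laplacian_bound:
  fixes R N s :: real
  defines "\<alpha> \<equiv> (2 * N + 1) / R\<^sup>2"
  assumes R: "R > 0" and N: "N \<ge> 0" and s: "(R/2)\<^sup>2 \<le> s" "s \<le> R\<^sup>2"
  shows "\<alpha> * exp (- \<alpha> * R\<^sup>2) \<le> exp (- \<alpha> * s) * (4 * \<alpha>\<^sup>2 * s - 2 * \<alpha> * N)"
proof -
  have \<alpha>: "\<alpha> > 0" "\<alpha> * \<alpha> * R\<^sup>2 = \<alpha> * (2 * N + 1)"
    using R N by (simp_all add: \<alpha>_def add_pos_nonneg power2_eq_square)
  have "\<alpha> * \<alpha> * R\<^sup>2 \<le> \<alpha> * \<alpha> * (4 * s)"
    using s(1) by (intro mult_left_mono) (auto simp: power_divide)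
  then have "\<alpha> \<le> 4 * \<alpha>\<^sup>2 * s - 2 * \<alpha> * N"
    using \<alpha>(2) by (simp add: power2_eq_square algebra_simps)
  moreover have "exp (- \<alpha> * R\<^sup>2) \<le> exp (- \<alpha> * s)" using s(2) \<alpha>(1) by simp
  ultimately show ?thesis using \<alpha>(1) by (metis mult.commute exp_ge_zero less_imp_le mult_mono)
qed

lemma hopf_barrier_laplacian_bound:
  fixes y z :: "real^'n" and R :: real
  defines "\<alpha> \<equiv> (2 * real CARD('n) + 1) / R\<^sup>2"
  assumes R: "R > 0" and y: "R/2 < dist z y" "dist z y < R"
  shows "\<alpha> * exp (- \<alpha> * R\<^sup>2) \<le> (\<Sum>k\<in>UNIV. ((4 * \<alpha>\<^sup>2 * exp (- \<alpha> * ((y - z) \<bullet> (y - z))) * ((y - z) \<bullet> axis k 1))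
      *\<^sub>R (y - z) + (- 2 * \<alpha> * exp (- \<alpha> * ((y - z) \<bullet> (y - z)))) *\<^sub>R axis k 1) $ k)"
proof -
  have "(y - z) \<bullet> (y - z) = (dist z y)\<^sup>2"
    by (simp add: dist_norm power2_norm_eq_inner norm_minus_commute)
  then have "(R/2)\<^sup>2 \<le> (y - z) \<bullet> (y - z)" "(y - z) \<bullet> (y - z) \<le> R\<^sup>2"
    using y R by (simp_all add: power_mono)
  from gaussian_laplacian_bound[OF R _ this, of "real CARD('n)"]
  have "\<alpha> * exp (- \<alpha> * R\<^sup>2) \<le> exp (- \<alpha> * ((y - z) \<bullet> (y - z)))
      * (4 * \<alpha>\<^sup>2 * ((y - z) \<bullet> (y - z)) - 2 * \<alpha> * real CARD('n))"
    unfolding \<alpha>_def by simp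
  then show ?thesis
    unfolding trace_rank_one_plus_scalar by (simp add: algebra_simps)
qed

lemma rescaled_u0:
  fixes c y :: "real^'n"
  assumes "l > 0"
  shows "l\<^sup>2 * u0 ((1 / l) *\<^sub>R (y - c)) = (l\<^sup>2 - (y - c) \<bullet> (y - c)) / 2"
proof -
  have "((1 / l) *\<^sub>R (y - c)) \<bullet> ((1 / l) *\<^sub>R (y - c)) = ((y - c) \<bullet> (y - c)) / l\<^sup>2"
    by (simp add: power2_eq_square)
  then show ?thesis
    unfolding u0_def power2_norm_eq_inner using assms by (simp add: field_simps)
qed

section \<open>The P-function of the torsion problem\<close>

locale torsion =
  fixes \<Omega> :: "(real^'n) set" and u :: "real^'n \<Rightarrow> real"
    and Du :: "real^'n \<Rightarrow> real^'n" and D2u :: "real^'n \<Rightarrow> real^'n \<Rightarrow> real^'n"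
  assumes open_\<Omega>: "open \<Omega>" and bounded_\<Omega>: "bounded \<Omega>"
    and grad: "\<forall>x\<in>\<Omega>. (u has_derivative (\<lambda>h. Du x \<bullet> h)) (at x)"
    and hess: "\<forall>x\<in>\<Omega>. (Du has_derivative D2u x) (at x)"
    and hess_cont: "\<forall>i j. continuous_on \<Omega> (\<lambda>x. D2u x (axis i 1) $ j)"
    and pde: "\<forall>x\<in>\<Omega>. (\<Sum>i\<in>UNIV. D2u x (axis i 1) $ i) = - real CARD('n)"
    and u_cont: "continuous_on (closure \<Omega>) u"
    and Du_cont: "continuous_on (closure \<Omega>) Du"
begin

definition P :: "real^'n \<Rightarrow> real" where
  "P x = Du x \<bullet> Du x + 2 * u x"

(* The value of Delta P if u were C^3. *)
definition F :: "real^'n \<Rightarrow> real" where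
  "F x = 2 * (\<Sum>j\<in>UNIV. \<Sum>k\<in>UNIV. (D2u x (axis j 1) $ k)\<^sup>2) - 2 * real CARD('n)"

definition P_h :: "real \<Rightarrow> real^'n \<Rightarrow> real" where
  "P_h h x = (\<Sum>j\<in>UNIV. (diff_quot h j u x)\<^sup>2) + 2 * u x"

lemma P_eq_sum: "P x = (\<Sum>j\<in>UNIV. (Du x $ j)\<^sup>2) + 2 * u x"
  by (simp add: P_def inner_vec_def power2_eq_square)

lemma F_nonneg:
  assumes "x \<in> \<Omega>"
  shows "F x \<ge> 0"
proof -
  let ?d = "\<lambda>j. D2u x (axis j 1) $ j"
  have "(real CARD('n))\<^sup>2 = (\<Sum>j\<in>UNIV. ?d j)\<^sup>2" using pde assms by simp
  also have "\<dots> \<le> (\<Sum>j\<in>UNIV. (?d j)\<^sup>2) * real CARD('n)"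
    using sum_squared_le_sum_of_squares[of ?d UNIV] by simp
  finally have "real CARD('n) \<le> (\<Sum>j\<in>UNIV. (?d j)\<^sup>2)" by (simp add: power2_eq_square)
  also have "\<dots> \<le> (\<Sum>j\<in>UNIV. \<Sum>k\<in>UNIV. (D2u x (axis j 1) $ k)\<^sup>2)"
    by (intro sum_mono member_le_sum) auto
  finally show ?thesis by (simp add: F_def)
qed

lemma u_has_derivative_along_axis:
  assumes "x + t *\<^sub>R axis k 1 \<in> \<Omega>"
  shows "((\<lambda>s. u (x + s *\<^sub>R axis k 1)) has_real_derivative Du (x + t *\<^sub>R axis k 1) $ k) (at t)"
  using has_field_derivative_along_line[OF grad[rule_format, OF assms]] by (simp add: inner_axis)

lemma Du_has_derivative_along_axis:
  assumes "x + t *\<^sub>R axis k 1 \<in> \<Omega>"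
  shows "((\<lambda>s. Du (x + s *\<^sub>R axis k 1) $ i) has_real_derivative D2u (x + t *\<^sub>R axis k 1) (axis k 1) $ i) (at t)"
  using has_field_derivative_along_line[OF has_derivative_vec_nth[OF hess[rule_format, OF assms]]] by simp

lemma eventually_diff_quot_close:
  assumes K: "compact K" "K \<subseteq> \<Omega>" and \<eta>: "\<eta> > 0"
  shows "eventually (\<lambda>h. \<forall>x\<in>K. (\<forall>j. x + h *\<^sub>R axis j 1 \<in> \<Omega>)
           \<and> (\<forall>j. \<bar>diff_quot h j u x - Du x $ j\<bar> \<le> \<eta>)
           \<and> (\<forall>j k. \<bar>diff_quot h j (\<lambda>y. Du y $ k) x - D2u x (axis j 1) $ k\<bar> \<le> \<eta>)) (at_right 0)"
proof -
  obtain r where r: "r > 0" and K'_compact: "compact {x + y |x y. x \<in> K \<and> y \<in> cball 0 r}"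
    and K'_sub: "{x + y |x y. x \<in> K \<and> y \<in> cball 0 r} \<subseteq> \<Omega>"
    using compact_thickening_subset[OF K(1) open_\<Omega> K(2)] by blast
  have segment: "x + s *\<^sub>R axis j 1 \<in> {x + y |x y. x \<in> K \<and> y \<in> cball 0 r}"
    if "x \<in> K" "0 \<le> s" "s \<le> r" for x s and j :: 'n
    using that by (intro CollectI exI[of _ x] exI[of _ "s *\<^sub>R axis j 1"]) auto
  have "eventually (\<lambda>h. h \<in> {0<..<r}) (at_right 0)"
    by (rule eventually_at_right_real) (use r in auto)
  moreover have "eventually (\<lambda>h. \<forall>x\<in>K. \<bar>diff_quot h j u x - Du x $ j\<bar> \<le> \<eta>) (at_right 0)" for j
    unfolding diff_quot_def
    by (rule difference_quotient_uniform[where f'="\<lambda>y v. Du y \<bullet> v", OF K'_compact r segment _ _ _ \<eta>])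
       (use grad K'_sub continuous_on_subset[OF Du_cont order_trans[OF K'_sub closure_subset]]
         in \<open>auto simp: inner_axis intro!: continuous_intros\<close>)
  moreover have "eventually (\<lambda>h. \<forall>x\<in>K. \<bar>diff_quot h j (\<lambda>y. Du y $ k) x - D2u x (axis j 1) $ k\<bar> \<le> \<eta>)
      (at_right 0)" for j k
    unfolding diff_quot_def
    by (rule difference_quotient_uniform[where f'="\<lambda>y v. D2u y v $ k", OF K'_compact r segment _ _ _ \<eta>])
       (use hess K'_sub continuous_on_subset[OF hess_cont[rule_format] K'_sub] in \<open>auto intro!: has_derivative_vec_nth\<close>)
  ultimately have "eventually (\<lambda>h. h \<in> {0<..<r} \<and> (\<forall>j. \<forall>x\<in>K. \<bar>diff_quot h j u x - Du x $ j\<bar> \<le> \<eta>)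
      \<and> (\<forall>j k. \<forall>x\<in>K. \<bar>diff_quot h j (\<lambda>y. Du y $ k) x - D2u x (axis j 1) $ k\<bar> \<le> \<eta>)) (at_right 0)"
    by (intro eventually_conj eventually_all_finite allI)
  then show ?thesis
  proof eventually_elim
    case (elim h)
    have "x + h *\<^sub>R axis j 1 \<in> \<Omega>" if "x \<in> K" for x j
      using segment[OF that, of h j] elim K'_sub by auto
    with elim show ?case by blast
  qed
qed

lemma eventually_diff_quot_approx:
  assumes K: "compact K" "K \<subseteq> \<Omega>" and \<epsilon>: "\<epsilon> > 0"
  shows "eventually (\<lambda>h. \<forall>x\<in>K. (\<forall>j. x + h *\<^sub>R axis j 1 \<in> \<Omega>) \<and> \<bar>P_h h x - P x\<bar> \<le> \<epsilon> \<and>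
           (\<Sum>j\<in>UNIV. \<Sum>k\<in>UNIV. (diff_quot h j (\<lambda>y. Du y $ k) x)\<^sup>2)
             \<ge> (\<Sum>j\<in>UNIV. \<Sum>k\<in>UNIV. (D2u x (axis j 1) $ k)\<^sup>2) - \<epsilon>) (at_right 0)"
proof -
  have cont_K: "continuous_on K Du" "\<And>j k. continuous_on K (\<lambda>x. D2u x (axis j 1) $ k)"
    using continuous_on_subset[OF Du_cont] continuous_on_subset[OF hess_cont[rule_format]] K(2) closure_subset
    by (meson order_trans)+
  have close: "eventually (\<lambda>h. \<forall>x\<in>K. (\<forall>j. x + h *\<^sub>R axis j 1 \<in> \<Omega>)
           \<and> (\<forall>j. \<bar>diff_quot h j u x - Du x $ j\<bar> \<le> \<eta>)
           \<and> (\<forall>j k. \<bar>diff_quot h j (\<lambda>y. Du y $ k) x - D2u x (axis j 1) $ k\<bar> \<le> \<eta>)) (at_right 0)"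
    if "\<eta> > 0" for \<eta>
    using eventually_diff_quot_close[OF K that] .
  have "eventually (\<lambda>h. \<forall>x\<in>K. \<forall>j. x + h *\<^sub>R axis j 1 \<in> \<Omega>) (at_right 0)"
    using close[OF zero_less_one] by eventually_elim blast
  moreover have "eventually (\<lambda>h. \<forall>x\<in>K. \<bar>(\<Sum>j\<in>UNIV. (diff_quot h j u x)\<^sup>2) - (\<Sum>j\<in>UNIV. (Du x $ j)\<^sup>2)\<bar> \<le> \<epsilon>) (at_right 0)"
  proof (rule eventually_sum_squares_uniform[OF _ K(1) _ _ \<epsilon>], safe)
    fix j and \<eta> :: real assume "\<eta> > 0"
    from close[OF this] show "eventually (\<lambda>h. \<forall>x\<in>K. \<bar>diff_quot h j u x - Du x $ j\<bar> \<le> \<eta>) (at_right 0)"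
      by eventually_elim blast
  qed (use cont_K in \<open>auto intro: continuous_intros\<close>)
  moreover have "eventually (\<lambda>h. \<forall>x\<in>K. \<bar>(\<Sum>jk\<in>UNIV. (diff_quot h (fst jk) (\<lambda>y. Du y $ snd jk) x)\<^sup>2)
                   - (\<Sum>jk\<in>UNIV. (D2u x (axis (fst jk) 1) $ snd jk)\<^sup>2)\<bar> \<le> \<epsilon>) (at_right 0)"
  proof (rule eventually_sum_squares_uniform[OF _ K(1) _ _ \<epsilon>], safe)
    fix j k :: 'n and \<eta> :: real assume "\<eta> > 0"
    from close[OF this] show "eventually (\<lambda>h. \<forall>x\<in>K.
        \<bar>diff_quot h j (\<lambda>y. Du y $ k) x - D2u x (axis j 1) $ k\<bar> \<le> \<eta>) (at_right 0)"
      by eventually_elim blast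
  qed (use cont_K in auto)
  ultimately show ?thesis
  proof eventually_elim
    case (elim h)
    have double_sum: "(\<Sum>jk\<in>UNIV. f (fst jk) (snd jk)) = (\<Sum>j\<in>UNIV. \<Sum>k\<in>UNIV. f j k)"
      for f :: "'n \<Rightarrow> 'n \<Rightarrow> real"
      by (simp add: sum.cartesian_product UNIV_Times_UNIV[symmetric] case_prod_beta del: UNIV_Times_UNIV)
    show ?case
    proof (intro ballI conjI)
      fix x assume x: "x \<in> K"
      show "\<forall>j. x + h *\<^sub>R axis j 1 \<in> \<Omega>" using elim(1) x by blast
      show "\<bar>P_h h x - P x\<bar> \<le> \<epsilon>" using elim(2) x by (simp add: P_h_def P_eq_sum)
      show "(\<Sum>j\<in>UNIV. \<Sum>k\<in>UNIV. (diff_quot h j (\<lambda>y. Du y $ k) x)\<^sup>2)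
          \<ge> (\<Sum>j\<in>UNIV. \<Sum>k\<in>UNIV. (D2u x (axis j 1) $ k)\<^sup>2) - \<epsilon>"
        using elim(3)[rule_format, OF x] double_sum[of "\<lambda>j k. (diff_quot h j (\<lambda>y. Du y $ k) x)\<^sup>2"]
          double_sum[of "\<lambda>j k. (D2u x (axis j 1) $ k)\<^sup>2"] by linarith
    qed
  qed
qed

lemma diff_quot_u_has_derivative_along_axis:
  assumes "x + t *\<^sub>R axis k 1 \<in> \<Omega>" "x + h *\<^sub>R axis j 1 + t *\<^sub>R axis k 1 \<in> \<Omega>"
  shows "((\<lambda>s. diff_quot h j u (x + s *\<^sub>R axis k 1)) has_real_derivative
           diff_quot h j (\<lambda>y. Du y $ k) (x + t *\<^sub>R axis k 1)) (at t)"
  using assms by (intro has_field_derivative_diff_quot_along_line u_has_derivative_along_axis)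

lemma diff_quot_Du_has_derivative_along_axis:
  assumes "x + t *\<^sub>R axis k 1 \<in> \<Omega>" "x + h *\<^sub>R axis j 1 + t *\<^sub>R axis k 1 \<in> \<Omega>"
  shows "((\<lambda>s. diff_quot h j (\<lambda>y. Du y $ i) (x + s *\<^sub>R axis k 1)) has_real_derivative
           diff_quot h j (\<lambda>y. D2u y (axis k 1) $ i) (x + t *\<^sub>R axis k 1)) (at t)"
  using assms by (intro has_field_derivative_diff_quot_along_line Du_has_derivative_along_axis)

lemma P_h_has_derivative_along_axis:
  assumes "x + t *\<^sub>R axis k 1 \<in> \<Omega>" "\<And>j. x + h *\<^sub>R axis j 1 + t *\<^sub>R axis k 1 \<in> \<Omega>"
  shows "((\<lambda>s. P_h h (x + s *\<^sub>R axis k 1)) has_real_derivative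
      (\<Sum>j\<in>UNIV. 2 * diff_quot h j u (x + t *\<^sub>R axis k 1) * diff_quot h j (\<lambda>y. Du y $ k) (x + t *\<^sub>R axis k 1))
        + 2 * Du (x + t *\<^sub>R axis k 1) $ k) (at t)"
  unfolding P_h_def
  by (rule derivative_eq_intros diff_quot_u_has_derivative_along_axis u_has_derivative_along_axis
      refl assms | simp add: mult_ac)+

lemma P_h_second_derivative_along_axis:
  assumes "x \<in> \<Omega>" "\<And>j. x + h *\<^sub>R axis j 1 \<in> \<Omega>"
  shows "((\<lambda>s. (\<Sum>j\<in>UNIV. 2 * diff_quot h j u (x + s *\<^sub>R axis k 1) * diff_quot h j (\<lambda>y. Du y $ k) (x + s *\<^sub>R axis k 1))
        + 2 * Du (x + s *\<^sub>R axis k 1) $ k) has_real_derivative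
      (\<Sum>j\<in>UNIV. 2 * ((diff_quot h j (\<lambda>y. Du y $ k) x)\<^sup>2
          + diff_quot h j u x * diff_quot h j (\<lambda>y. D2u y (axis k 1) $ k) x))
        + 2 * D2u x (axis k 1) $ k) (at 0)"
  using assms
  by (auto intro!: derivative_eq_intros diff_quot_u_has_derivative_along_axis
      diff_quot_Du_has_derivative_along_axis Du_has_derivative_along_axis sum.cong
      simp: power2_eq_square algebra_simps)

lemma sum_diff_quot_laplacian_eq_0:
  assumes "x \<in> \<Omega>" "x + h *\<^sub>R axis j 1 \<in> \<Omega>"
  shows "(\<Sum>k\<in>UNIV. diff_quot h j (\<lambda>y. D2u y (axis k 1) $ k) x) = 0"
  using pde assms by (simp add: diff_quot_def sum_divide_distrib[symmetric] sum_subtractf)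

lemma laplacian_P_h_plus_barrier_at_max:
  fixes B :: "real^'n \<Rightarrow> real" and DB :: "real^'n \<Rightarrow> real^'n"
    and D2B :: "real^'n \<Rightarrow> real^'n \<Rightarrow> real^'n"
  assumes B: "\<And>y. (B has_derivative (\<lambda>v. DB y \<bullet> v)) (at y)" "\<And>y. (DB has_derivative D2B y) (at y)"
    and \<rho>: "\<rho> > 0"
    and nbhd: "\<And>y. y \<in> ball x \<rho> \<Longrightarrow> y \<in> \<Omega> \<and> (\<forall>j. y + h *\<^sub>R axis j 1 \<in> \<Omega>) \<and> P_h h y + B y \<le> P_h h x + B x"
  shows "2 * (\<Sum>j\<in>UNIV. \<Sum>k\<in>UNIV. (diff_quot h j (\<lambda>y. Du y $ k) x)\<^sup>2) - 2 * real CARD('n)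
           + (\<Sum>k\<in>UNIV. D2B x (axis k 1) $ k) \<le> 0"
proof -
  have x: "x \<in> \<Omega>" "\<And>j. x + h *\<^sub>R axis j 1 \<in> \<Omega>" using nbhd[of x] \<rho> by auto
  have line: "x + t *\<^sub>R axis k 1 \<in> ball x \<rho>" if "\<bar>t\<bar> < \<rho>" for t k
    using that by (simp add: dist_norm)
  define w where "w j = diff_quot h j u x" for j
  define q where "q j k = diff_quot h j (\<lambda>y. Du y $ k) x" for j k
  define m where "m j k = diff_quot h j (\<lambda>y. D2u y (axis k 1) $ k) x" for j k
  have second: "(\<Sum>j\<in>UNIV. 2 * ((q j k)\<^sup>2 + w j * m j k)) + 2 * D2u x (axis k 1) $ k
      + D2B x (axis k 1) $ k \<le> 0" for k
  proof (rule DERIV_local_max_second_nonpos[OF \<rho>])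
    fix t :: real assume t: "\<bar>t\<bar> < \<rho>"
    have inside: "x + t *\<^sub>R axis k 1 \<in> \<Omega>" "x + h *\<^sub>R axis j 1 + t *\<^sub>R axis k 1 \<in> \<Omega>" for j
      using nbhd[OF line[OF t]] by (auto simp: add_ac)
    show "((\<lambda>s. P_h h (x + s *\<^sub>R axis k 1) + B (x + s *\<^sub>R axis k 1)) has_real_derivative
        (\<Sum>j\<in>UNIV. 2 * diff_quot h j u (x + t *\<^sub>R axis k 1) * diff_quot h j (\<lambda>y. Du y $ k) (x + t *\<^sub>R axis k 1))
          + 2 * Du (x + t *\<^sub>R axis k 1) $ k + DB (x + t *\<^sub>R axis k 1) $ k) (at t)"
      using DERIV_add[OF P_h_has_derivative_along_axis[OF inside] has_field_derivative_along_line[where y=x and t=t and v="axis k 1", OF B(1)]]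
      by (simp add: inner_axis)
    show "P_h h (x + t *\<^sub>R axis k 1) + B (x + t *\<^sub>R axis k 1) \<le> P_h h (x + 0 *\<^sub>R axis k 1) + B (x + 0 *\<^sub>R axis k 1)"
      using nbhd[OF line[OF t]] by simp
  next
    show "((\<lambda>s. (\<Sum>j\<in>UNIV. 2 * diff_quot h j u (x + s *\<^sub>R axis k 1) * diff_quot h j (\<lambda>y. Du y $ k) (x + s *\<^sub>R axis k 1))
          + 2 * Du (x + s *\<^sub>R axis k 1) $ k + DB (x + s *\<^sub>R axis k 1) $ k) has_real_derivative
        (\<Sum>j\<in>UNIV. 2 * ((q j k)\<^sup>2 + w j * m j k)) + 2 * D2u x (axis k 1) $ k + D2B x (axis k 1) $ k) (at 0)"
      unfolding q_def w_def m_def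
      using DERIV_add[OF P_h_second_derivative_along_axis[OF x]
          has_field_derivative_along_line[where y=x and t=0 and v="axis k 1", OF has_derivative_vec_nth[OF B(2)]]]
      by simp
  qed
  \<comment> \<open>the third derivatives of \<open>u\<close> cancel because \<open>\<Delta>u\<close> is constant\<close>
  have "(\<Sum>k\<in>UNIV. \<Sum>j\<in>UNIV. w j * m j k) = (\<Sum>j\<in>UNIV. w j * (\<Sum>k\<in>UNIV. m j k))"
    by (subst sum.swap) (simp add: sum_distrib_left)
  also have "\<dots> = 0" using sum_diff_quot_laplacian_eq_0[OF x] by (simp add: m_def)
  finally have mixed: "(\<Sum>k\<in>UNIV. \<Sum>j\<in>UNIV. w j * m j k) = 0" .
  have "(\<Sum>k\<in>UNIV. (\<Sum>j\<in>UNIV. 2 * ((q j k)\<^sup>2 + w j * m j k)) + 2 * D2u x (axis k 1) $ k + D2B x (axis k 1) $ k)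
      = 2 * (\<Sum>k\<in>UNIV. \<Sum>j\<in>UNIV. (q j k)\<^sup>2) + 2 * (\<Sum>k\<in>UNIV. \<Sum>j\<in>UNIV. w j * m j k)
        + 2 * (\<Sum>k\<in>UNIV. D2u x (axis k 1) $ k) + (\<Sum>k\<in>UNIV. D2B x (axis k 1) $ k)"
    by (simp add: sum.distrib sum_distrib_left distrib_left)
  also have "\<dots> = 2 * (\<Sum>j\<in>UNIV. \<Sum>k\<in>UNIV. (q j k)\<^sup>2) - 2 * real CARD('n) + (\<Sum>k\<in>UNIV. D2B x (axis k 1) $ k)"
    using mixed pde x(1) sum.swap[of "\<lambda>k j. (q j k)\<^sup>2" UNIV UNIV] by simp
  finally show ?thesis
    using second sum_nonpos[of UNIV "\<lambda>k. (\<Sum>j\<in>UNIV. 2 * ((q j k)\<^sup>2 + w j * m j k)) + 2 * D2u x (axis k 1) $ k + D2B x (axis k 1) $ k"]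
    by (simp add: q_def)
qed

section \<open>Maximum principles for P\<close>

lemma P_h_continuous_on:
  assumes "K \<subseteq> \<Omega>" "h \<noteq> 0" "\<And>y j. y \<in> K \<Longrightarrow> y + h *\<^sub>R axis j 1 \<in> \<Omega>"
  shows "continuous_on K (P_h h)"
proof -
  have "(\<lambda>y. y + h *\<^sub>R axis j 1) ` K \<subseteq> closure \<Omega>" for j
    using assms(3) closure_subset by blast
  then have "continuous_on K (\<lambda>y. u (y + h *\<^sub>R axis j 1))" for j
    by (rule continuous_on_compose2[OF u_cont, rotated]) (intro continuous_intros)
  moreover have "continuous_on K u"
    using continuous_on_subset[OF u_cont] assms(1) closure_subset by blast
  ultimately show ?thesis
    unfolding P_h_def[abs_def] diff_quot_def
    by (intro continuous_on_add continuous_on_sum continuous_on_power continuous_on_divide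
        continuous_on_diff continuous_on_mult continuous_on_const) (use assms(2) in auto)
qed

lemma max_principle_P_h_plus_barrier:
  fixes B :: "real^'n \<Rightarrow> real" and DB :: "real^'n \<Rightarrow> real^'n"
    and D2B :: "real^'n \<Rightarrow> real^'n \<Rightarrow> real^'n"
  assumes A: "open A" "closure A \<subseteq> \<Omega>" "bounded A"
    and B: "\<And>y. (B has_derivative (\<lambda>v. DB y \<bullet> v)) (at y)" "\<And>y. (DB has_derivative D2B y) (at y)"
    and h: "h \<noteq> 0" "\<And>y j. y \<in> closure A \<Longrightarrow> y + h *\<^sub>R axis j 1 \<in> \<Omega>"
    and subharmonic: "\<And>y. y \<in> A \<Longrightarrow> 2 * (\<Sum>j\<in>UNIV. \<Sum>k\<in>UNIV. (diff_quot h j (\<lambda>y. Du y $ k) y)\<^sup>2)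
        - 2 * real CARD('n) + (\<Sum>k\<in>UNIV. D2B y (axis k 1) $ k) > 0"
    and x: "x \<in> A"
  obtains x1 where "x1 \<in> frontier A" "P_h h x + B x \<le> P_h h x1 + B x1"
proof -
  have K: "compact (closure A)" "closure A \<noteq> {}" using A(3) x closure_subset by auto
  have "continuous_on (closure A) (\<lambda>y. P_h h y + B y)"
    using P_h_continuous_on[OF A(2) h] has_derivative_continuous[OF B(1)]
    by (intro continuous_on_add) (auto simp: continuous_at_imp_continuous_on)
  then obtain x1 where x1: "x1 \<in> closure A" "\<And>y. y \<in> closure A \<Longrightarrow> P_h h y + B y \<le> P_h h x1 + B x1"
    using continuous_attains_sup[OF K] by blast
  have "x1 \<notin> A"
  proof
    assume "x1 \<in> A"
    then obtain \<rho> where \<rho>: "\<rho> > 0" "ball x1 \<rho> \<subseteq> A" using A(1) open_contains_ball by blast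
    have "y \<in> \<Omega> \<and> (\<forall>j. y + h *\<^sub>R axis j 1 \<in> \<Omega>) \<and> P_h h y + B y \<le> P_h h x1 + B x1"
      if "y \<in> ball x1 \<rho>" for y
    proof -
      have "y \<in> closure A" using that \<rho>(2) closure_subset by blast
      then show ?thesis using A(2) h(2) x1(2) by blast
    qed
    from laplacian_P_h_plus_barrier_at_max[OF B \<rho>(1) this] subharmonic[OF \<open>x1 \<in> A\<close>]
    show False by linarith
  qed
  then show ?thesis
    using that[of x1] x1 x closure_subset A(1) by (auto simp: frontier_def interior_open)
qed

lemma max_principle_P_plus_barrier:
  fixes B :: "real^'n \<Rightarrow> real" and DB :: "real^'n \<Rightarrow> real^'n"
    and D2B :: "real^'n \<Rightarrow> real^'n \<Rightarrow> real^'n"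
  assumes A: "open A" "closure A \<subseteq> \<Omega>"
    and B: "\<And>y. (B has_derivative (\<lambda>v. DB y \<bullet> v)) (at y)" "\<And>y. (DB has_derivative D2B y) (at y)"
    and c: "c > 0" "\<And>y. y \<in> A \<Longrightarrow> F y + (\<Sum>k\<in>UNIV. D2B y (axis k 1) $ k) \<ge> c"
    and boundary: "\<And>z. z \<in> frontier A \<Longrightarrow> P z + B z \<le> m"
    and x: "x \<in> A"
  shows "P x + B x \<le> m"
proof (rule field_le_epsilon)
  fix \<delta> :: real assume \<delta>: "\<delta> > 0"
  have "bounded A" by (rule bounded_subset[OF bounded_\<Omega> order_trans[OF closure_subset A(2)]])
  then have K: "compact (closure A)" "closure A \<subseteq> \<Omega>" using A(2) by (simp_all add: compact_closure)
  define \<epsilon> where "\<epsilon> = min (\<delta>/2) (c/4)"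
  have \<epsilon>: "\<epsilon> > 0" "\<epsilon> \<le> \<delta>/2" "\<epsilon> \<le> c/4" using \<delta> c(1) by (simp_all add: \<epsilon>_def)
  have "eventually (\<lambda>h. h > 0 \<and> (\<forall>y\<in>closure A. (\<forall>j. y + h *\<^sub>R axis j 1 \<in> \<Omega>) \<and> \<bar>P_h h y - P y\<bar> \<le> \<epsilon> \<and>
      (\<Sum>j\<in>UNIV. \<Sum>k\<in>UNIV. (diff_quot h j (\<lambda>y. Du y $ k) y)\<^sup>2)
        \<ge> (\<Sum>j\<in>UNIV. \<Sum>k\<in>UNIV. (D2u y (axis j 1) $ k)\<^sup>2) - \<epsilon>)) (at_right 0)"
    by (intro eventually_conj eventually_diff_quot_approx K \<epsilon>(1)) (simp add: eventually_at_filter)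
  then obtain h where h: "h > 0" and approx: "\<forall>y\<in>closure A. (\<forall>j. y + h *\<^sub>R axis j 1 \<in> \<Omega>) \<and>
      \<bar>P_h h y - P y\<bar> \<le> \<epsilon> \<and> (\<Sum>j\<in>UNIV. \<Sum>k\<in>UNIV. (diff_quot h j (\<lambda>y. Du y $ k) y)\<^sup>2)
        \<ge> (\<Sum>j\<in>UNIV. \<Sum>k\<in>UNIV. (D2u y (axis j 1) $ k)\<^sup>2) - \<epsilon>"
    using eventually_happens'[OF trivial_limit_at_right_real] by blast
  have shift: "y + h *\<^sub>R axis j 1 \<in> \<Omega>" if "y \<in> closure A" for y j
    using approx that by blast
  have close: "\<bar>P_h h y - P y\<bar> \<le> \<delta>/2" if "y \<in> closure A" for y
  proof -
    have "\<bar>P_h h y - P y\<bar> \<le> \<epsilon>" using approx that by blast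
    then show ?thesis using \<epsilon>(2) by linarith
  qed
  have subharmonic: "2 * (\<Sum>j\<in>UNIV. \<Sum>k\<in>UNIV. (diff_quot h j (\<lambda>y. Du y $ k) y)\<^sup>2) - 2 * real CARD('n)
      + (\<Sum>k\<in>UNIV. D2B y (axis k 1) $ k) > 0" if "y \<in> A" for y
  proof -
    have "(\<Sum>j\<in>UNIV. \<Sum>k\<in>UNIV. (diff_quot h j (\<lambda>y. Du y $ k) y)\<^sup>2)
        \<ge> (\<Sum>j\<in>UNIV. \<Sum>k\<in>UNIV. (D2u y (axis j 1) $ k)\<^sup>2) - \<epsilon>"
    proof -
      have "y \<in> closure A" using that closure_subset by blast
      then show ?thesis using approx by blast
    qed
    then show ?thesis using c(2)[OF that] \<epsilon>(3) c(1) unfolding F_def by linarith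
  qed
  have "h \<noteq> 0" using h by simp
  then obtain x1 where x1: "x1 \<in> frontier A" "P_h h x + B x \<le> P_h h x1 + B x1"
    by (rule max_principle_P_h_plus_barrier[OF A \<open>bounded A\<close> B _ shift subharmonic x])
  have "x1 \<in> closure A" using x1(1) by (simp add: frontier_def)
  have "x \<in> closure A" using x closure_subset by blast
  then have "P x + B x \<le> P_h h x + B x + \<delta>/2" using close[of x] by linarith
  also have "\<dots> \<le> P_h h x1 + B x1 + \<delta>/2" using x1(2) by simp
  also have "\<dots> \<le> P x1 + B x1 + \<delta>" using close[OF \<open>x1 \<in> closure A\<close>] by linarith
  also have "\<dots> \<le> m + \<delta>" using boundary[OF x1(1)] by simp
  finally show "P x + B x \<le> m + \<delta>" .
qed

lemma max_principle_P_plus_quadratic: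
  assumes A: "open A" "closure A \<subseteq> \<Omega>"
    and c: "c > 0" "\<And>y. y \<in> A \<Longrightarrow> F y + 2 * \<kappa> * real CARD('n) \<ge> c"
    and boundary: "\<And>z. z \<in> frontier A \<Longrightarrow> P z + \<kappa> * ((z - a) \<bullet> (z - a)) \<le> m"
    and x: "x \<in> A"
  shows "P x + \<kappa> * ((x - a) \<bullet> (x - a)) \<le> m"
proof (rule max_principle_P_plus_barrier[OF A _ _ c(1) _ boundary x])
  show "((\<lambda>y. \<kappa> * ((y - a) \<bullet> (y - a))) has_derivative (\<lambda>v. ((2 * \<kappa>) *\<^sub>R (y - a)) \<bullet> v)) (at y)" for y
    by (auto intro!: derivative_eq_intros simp: algebra_simps inner_commute)
  show "((\<lambda>y. (2 * \<kappa>) *\<^sub>R (y - a)) has_derivative (\<lambda>v. (2 * \<kappa>) *\<^sub>R v)) (at y)" for y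
    by (auto intro!: derivative_eq_intros)
  show "c \<le> F y + (\<Sum>k\<in>UNIV. ((2 * \<kappa>) *\<^sub>R axis k 1 :: real^'n) $ k)" if "y \<in> A" for y
    using c(2)[OF that] by (simp add: mult_ac)
qed

lemma P_continuous: "continuous_on (closure \<Omega>) P"
  unfolding P_def using u_cont Du_cont by (intro continuous_intros) auto

lemma P_superlevel_set:
  assumes boundary: "\<And>z. z \<in> frontier \<Omega> \<Longrightarrow> P z \<le> G" and "G < t"
  shows "open {y \<in> \<Omega>. t < P y}" "closure {y \<in> \<Omega>. t < P y} \<subseteq> \<Omega>"
proof -
  show "open {y \<in> \<Omega>. t < P y}"
    using continuous_open_preimage[OF continuous_on_subset[OF P_continuous closure_subset] open_\<Omega>
        open_greaterThan, of t]
    by (simp add: Int_def vimage_def conj_commute)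
  have "closed {y \<in> closure \<Omega>. t \<le> P y}"
    using continuous_closed_preimage[OF P_continuous closed_closure closed_atLeast, of t]
    by (simp add: Int_def vimage_def conj_commute)
  then have "closure {y \<in> \<Omega>. t < P y} \<subseteq> {y \<in> closure \<Omega>. t \<le> P y}"
    by (rule closure_minimal[rotated]) (auto intro: closure_subset[THEN subsetD])
  also have "\<dots> \<subseteq> \<Omega>"
    using boundary \<open>G < t\<close> closure_Un_frontier[of \<Omega>] by force
  finally show "closure {y \<in> \<Omega>. t < P y} \<subseteq> \<Omega>" .
qed

lemma P_max_principle:
  assumes boundary: "\<And>z. z \<in> frontier \<Omega> \<Longrightarrow> P z \<le> G" and x: "x \<in> \<Omega>"
  shows "P x \<le> G"
  \<comment> \<open>\<open>F \<ge> 0\<close> gives no strict subharmonicity; the barrier \<open>\<epsilon> |x|\<^sup>2\<close> supplies it\<close>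
proof (rule field_le_epsilon)
  fix \<delta> :: real assume \<delta>: "\<delta> > 0"
  obtain b where b: "\<And>y. y \<in> closure \<Omega> \<Longrightarrow> norm y \<le> b"
    using bounded_closure[OF bounded_\<Omega>] unfolding bounded_iff by blast
  have b2: "y \<bullet> y \<le> b\<^sup>2" if "y \<in> closure \<Omega>" for y
    using power_mono[OF b[OF that] norm_ge_zero, of 2] by (simp add: power2_norm_eq_inner)
  define \<epsilon> where "\<epsilon> = \<delta> / (2 * (b\<^sup>2 + 1))"
  have "\<epsilon> * b\<^sup>2 = \<delta>/2 * (b\<^sup>2 / (b\<^sup>2 + 1))"
    by (simp add: \<epsilon>_def)
  also have "\<dots> \<le> \<delta>/2"
    using \<delta> by (intro mult_left_le) (auto simp: add_nonneg_pos divide_le_eq_1)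
  finally have \<epsilon>: "\<epsilon> > 0" "\<epsilon> * b\<^sup>2 \<le> \<delta>/2"
    using \<delta> by (auto simp: \<epsilon>_def add_nonneg_pos)
  define A where "A = {y \<in> \<Omega>. G + \<delta>/2 < P y}"
  have "open A" and clA: "closure A \<subseteq> \<Omega>"
    using P_superlevel_set[OF boundary, of "G + \<delta>/2"] \<delta> by (simp_all add: A_def)
  show "P x \<le> G + \<delta>"
  proof (cases "x \<in> A")
    case False
    with x \<delta> show ?thesis by (simp add: A_def)
  next
    case True
    have "P x + \<epsilon> * ((x - 0) \<bullet> (x - 0)) \<le> G + \<delta>/2 + \<epsilon> * b\<^sup>2"
    proof (rule max_principle_P_plus_quadratic[OF \<open>open A\<close> clA, of "2 * \<epsilon> * real CARD('n)"])
      show "2 * \<epsilon> * real CARD('n) \<le> F y + 2 * \<epsilon> * real CARD('n)" if "y \<in> A" for y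
        using F_nonneg that by (simp add: A_def)
      show "P z + \<epsilon> * ((z - 0) \<bullet> (z - 0)) \<le> G + \<delta>/2 + \<epsilon> * b\<^sup>2" if "z \<in> frontier A" for z
      proof -
        have z: "z \<in> \<Omega>" "z \<notin> A" using that clA \<open>open A\<close> by (auto simp: frontier_def interior_open)
        then have "P z \<le> G + \<delta>/2" by (simp add: A_def)
        moreover have "\<epsilon> * (z \<bullet> z) \<le> \<epsilon> * b\<^sup>2"
          using b2[of z] z(1) closure_subset \<epsilon>(1) by (intro mult_left_mono) auto
        ultimately show ?thesis by simp
      qed
    qed (use True \<epsilon> in auto)
    moreover have "\<epsilon> * (x \<bullet> x) \<ge> 0" using \<epsilon>(1) by simp
    ultimately show ?thesis using \<epsilon>(2) by simp
  qed
qed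

lemma P_annulus_barrier:
  fixes z :: "real^'n" and R :: real
  defines "\<alpha> \<equiv> (2 * real CARD('n) + 1) / R\<^sup>2"
  assumes R: "R > 0" "cball z R \<subseteq> \<Omega>" and le_m: "\<And>x. x \<in> \<Omega> \<Longrightarrow> P x \<le> m"
    and \<gamma>: "\<gamma> > 0" "\<And>y. y \<in> sphere z (R/2) \<Longrightarrow> P y \<le> m - \<gamma>"
    and y: "R/2 < dist z y" "dist z y < R"
  shows "P y + \<gamma>/2 * hopf_barrier \<alpha> R z y \<le> m"
proof -
  define g where "g y = exp (- \<alpha> * ((y - z) \<bullet> (y - z)))" for y
  have \<alpha>: "\<alpha> > 0" using R(1) by (simp add: \<alpha>_def add_pos_nonneg)
  define A where "A = {y. R/2 < dist z y \<and> dist z y < R}"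
  have "open A" unfolding A_def by (intro open_Collect_conj open_Collect_less continuous_intros)
  have clA: "closure A \<subseteq> {y. R/2 \<le> dist z y \<and> dist z y \<le> R}"
    by (rule closure_minimal) (auto simp: A_def intro!: closed_Collect_conj closed_Collect_le continuous_intros)
  then have "closure A \<subseteq> \<Omega>" using R(2) by (force simp: subset_iff)
  show ?thesis
  proof (rule max_principle_P_plus_barrier[OF \<open>open A\<close> \<open>closure A \<subseteq> \<Omega>\<close>,
        of _ "\<lambda>y. (\<gamma>/2) *\<^sub>R ((- 2 * \<alpha> * g y) *\<^sub>R (y - z))"
        "\<lambda>y v. (\<gamma>/2) *\<^sub>R ((4 * \<alpha>\<^sup>2 * g y * ((y - z) \<bullet> v)) *\<^sub>R (y - z) + (- 2 * \<alpha> * g y) *\<^sub>R v)"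
        "\<gamma>/2 * (\<alpha> * exp (- \<alpha> * R\<^sup>2))"])
    show "((\<lambda>y. \<gamma>/2 * hopf_barrier \<alpha> R z y) has_derivative
        (\<lambda>v. ((\<gamma>/2) *\<^sub>R ((- 2 * \<alpha> * g y) *\<^sub>R (y - z))) \<bullet> v)) (at y)" for y
      by (rule has_derivative_eq_rhs[OF has_derivative_mult_right[OF hopf_barrier_has_derivative]])
         (simp add: g_def fun_eq_iff)
    have "((\<lambda>y. (- 2 * \<alpha> * g y) *\<^sub>R (y - z)) has_derivative
        (\<lambda>v. (4 * \<alpha>\<^sup>2 * g y * ((y - z) \<bullet> v)) *\<^sub>R (y - z) + (- 2 * \<alpha> * g y) *\<^sub>R v)) (at y)" for y
      unfolding g_def by (auto intro!: derivative_eq_intros simp: algebra_simps inner_commute power2_eq_square)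
    then show "((\<lambda>y. (\<gamma>/2) *\<^sub>R ((- 2 * \<alpha> * g y) *\<^sub>R (y - z))) has_derivative (\<lambda>v. (\<gamma>/2) *\<^sub>R
        ((4 * \<alpha>\<^sup>2 * g y * ((y - z) \<bullet> v)) *\<^sub>R (y - z) + (- 2 * \<alpha> * g y) *\<^sub>R v))) (at y)" for y
      by (rule has_derivative_scaleR_right)
    show "0 < \<gamma>/2 * (\<alpha> * exp (- \<alpha> * R\<^sup>2))" using \<gamma>(1) \<alpha> by simp
  next
    fix y assume "y \<in> A"
    then have "R/2 < dist z y" "dist z y < R" "y \<in> \<Omega>"
      using \<open>closure A \<subseteq> \<Omega>\<close> closure_subset[of A] by (auto simp: A_def)
    note lap = hopf_barrier_laplacian_bound[OF R(1) this(1,2), folded \<alpha>_def]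
    have "\<gamma>/2 * (\<alpha> * exp (- \<alpha> * R\<^sup>2)) \<le> \<gamma>/2 * (\<Sum>k\<in>UNIV. ((4 * \<alpha>\<^sup>2 * g y
        * ((y - z) \<bullet> axis k 1)) *\<^sub>R (y - z) + (- 2 * \<alpha> * g y) *\<^sub>R axis k 1) $ k)"
      using mult_left_mono[OF lap, of "\<gamma>/2"] \<gamma>(1) by (simp add: g_def)
    then show "\<gamma>/2 * (\<alpha> * exp (- \<alpha> * R\<^sup>2)) \<le> F y + (\<Sum>k\<in>UNIV. ((\<gamma>/2) *\<^sub>R ((4 * \<alpha>\<^sup>2 * g y
        * ((y - z) \<bullet> axis k 1)) *\<^sub>R (y - z) + (- 2 * \<alpha> * g y) *\<^sub>R axis k 1)) $ k)"
      using F_nonneg[OF \<open>y \<in> \<Omega>\<close>] by (simp add: sum_distrib_left)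
  next
    fix w assume "w \<in> frontier A"
    then have "w \<in> closure A" "w \<notin> A" "w \<in> \<Omega>"
      using \<open>open A\<close> \<open>closure A \<subseteq> \<Omega>\<close> by (auto simp: frontier_def interior_open)
    then have "dist z w = R/2 \<or> dist z w = R" using clA by (auto simp: A_def)
    then show "P w + \<gamma>/2 * hopf_barrier \<alpha> R z w \<le> m"
    proof
      assume "dist z w = R/2"
      then have "P w \<le> m - \<gamma>" using \<gamma>(2)[of w] by simp
      moreover have "hopf_barrier \<alpha> R z w \<le> 1"
      proof -
        have "exp (- \<alpha> * ((w - z) \<bullet> (w - z))) \<le> 1" using \<alpha> by simp
        then show ?thesis unfolding hopf_barrier_def using exp_gt_zero[of "- \<alpha> * R\<^sup>2"] by linarith
      qed
      then have "\<gamma>/2 * hopf_barrier \<alpha> R z w \<le> \<gamma>/2" using \<gamma>(1) by (simp add: mult_left_le)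
      ultimately show ?thesis using \<gamma>(1) by linarith
    next
      assume "dist z w = R"
      then have "(w - z) \<bullet> (w - z) = R\<^sup>2"
        by (simp add: dist_norm power2_norm_eq_inner[symmetric] norm_minus_commute)
      then show ?thesis using le_m[OF \<open>w \<in> \<Omega>\<close>] by (simp add: hopf_barrier_def)
    qed
  qed (use y in \<open>simp add: A_def\<close>)
qed

lemma P_differentiable:
  assumes "x \<in> \<Omega>"
  shows "P differentiable (at x)"
proof -
  have u': "(u has_derivative (\<lambda>h. Du x \<bullet> h)) (at x)" and Du': "(Du has_derivative D2u x) (at x)"
    using grad hess assms by auto
  have "(P has_derivative (\<lambda>v. Du x \<bullet> D2u x v + D2u x v \<bullet> Du x + 2 * (Du x \<bullet> v))) (at x)"
    unfolding P_def[abs_def] by (rule derivative_eq_intros u' Du' refl)+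
  then show ?thesis unfolding differentiable_def by blast
qed

lemma P_gap_on_inner_sphere:
  assumes R: "R > 0" "cball z R \<subseteq> \<Omega>" and lt_m: "\<And>y. y \<in> ball z R \<Longrightarrow> P y < m"
  obtains \<gamma> where "\<gamma> > 0" "\<And>y. y \<in> sphere z (R/2) \<Longrightarrow> P y \<le> m - \<gamma>"
proof -
  have "sphere z (R/2) \<subseteq> \<Omega>" using R by auto
  then have "continuous_on (sphere z (R/2)) P"
    using continuous_on_subset[OF P_continuous] closure_subset by blast
  then obtain ys where ys: "ys \<in> sphere z (R/2)" "\<And>y. y \<in> sphere z (R/2) \<Longrightarrow> P y \<le> P ys"
    using continuous_attains_sup[OF compact_sphere, of z "R/2" P] R(1) by auto
  show ?thesis by (rule that[of "m - P ys"]) (use lt_m[of ys] ys R(1) in auto)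
qed

lemma P_hopf:
  assumes R: "R > 0" "cball z R \<subseteq> \<Omega>" and le_m: "\<And>x. x \<in> \<Omega> \<Longrightarrow> P x \<le> m"
    and lt_m: "\<And>y. y \<in> ball z R \<Longrightarrow> P y < m" and x1: "dist z x1 = R"
  shows "P x1 < m"
proof (rule ccontr)
  assume "\<not> P x1 < m"
  have "x1 \<in> \<Omega>" using x1 R(2) by auto
  with \<open>\<not> P x1 < m\<close> le_m have "P x1 = m" by force
  obtain \<gamma> where \<gamma>: "\<gamma> > 0" "\<And>y. y \<in> sphere z (R/2) \<Longrightarrow> P y \<le> m - \<gamma>"
    using P_gap_on_inner_sphere[OF R lt_m] by blast
  define \<alpha> where "\<alpha> = (2 * real CARD('n) + 1) / R\<^sup>2"
  define d where "d = z - x1"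
  define \<phi> where "\<phi> t = P (x1 + t *\<^sub>R d) + \<gamma>/2 * hopf_barrier \<alpha> R z (x1 + t *\<^sub>R d)" for t
  have d: "x1 - z = - d" "d \<bullet> d = R\<^sup>2"
    using x1 by (simp_all add: d_def dist_norm power2_norm_eq_inner[symmetric])
  have "\<phi> 0 = m" using \<open>P x1 = m\<close> d by (simp add: \<phi>_def hopf_barrier_def)
  have "\<phi> t \<le> m" if "0 < t" "t < 1/2" for t
  proof -
    have "z - (x1 + t *\<^sub>R d) = (1 - t) *\<^sub>R (z - x1)" by (simp add: d_def algebra_simps)
    then have "dist z (x1 + t *\<^sub>R d) = R - t * R" using x1 that by (simp add: dist_norm left_diff_distrib)
    moreover have "0 < t * R" "t * R < 1/2 * R" using that R(1) by simp_all
    ultimately have "R/2 < dist z (x1 + t *\<^sub>R d)" "dist z (x1 + t *\<^sub>R d) < R" by simp_all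
    from P_annulus_barrier[OF R le_m \<gamma> this] show ?thesis by (simp add: \<phi>_def \<alpha>_def)
  qed
  obtain P' where P': "(P has_derivative P') (at x1)"
    using P_differentiable[OF \<open>x1 \<in> \<Omega>\<close>] unfolding differentiable_def by blast
  have "P' = (\<lambda>v. 0)"
    by (rule differential_zero_maxmin[OF \<open>x1 \<in> \<Omega>\<close> open_\<Omega> P']) (use le_m \<open>P x1 = m\<close> in auto)
  then have "(\<phi> has_real_derivative \<gamma>/2 * (- 2 * \<alpha> * exp (- \<alpha> * R\<^sup>2) * ((x1 - z) \<bullet> d))) (at 0)"
    using DERIV_add[OF has_field_derivative_along_line[of P P' x1 0 d]
        DERIV_cmult[OF has_field_derivative_along_line[OF hopf_barrier_has_derivative[of \<alpha> R z "x1 + 0 *\<^sub>R d"]],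
          of "\<gamma>/2"]] P' d
    by (simp add: \<phi>_def[abs_def])
  moreover have "\<gamma>/2 * (- 2 * \<alpha> * exp (- \<alpha> * R\<^sup>2) * ((x1 - z) \<bullet> d)) > 0"
  proof -
    have "\<alpha> > 0" using R(1) by (simp add: \<alpha>_def add_pos_nonneg)
    moreover have "(x1 - z) \<bullet> d = - R\<^sup>2" using d by simp
    ultimately show ?thesis using \<gamma>(1) R(1) by (simp add: zero_less_mult_iff)
  qed
  ultimately obtain e where "e > 0" "\<And>h. h > 0 \<Longrightarrow> h < e \<Longrightarrow> \<phi> 0 < \<phi> (0 + h)"
    using DERIV_pos_inc_right by blast
  then have "\<phi> 0 < \<phi> (min e (1/2) / 2)" by simp
  then show False using \<open>\<phi> 0 = m\<close> \<open>e > 0\<close> \<open>\<And>t. 0 < t \<Longrightarrow> t < 1/2 \<Longrightarrow> \<phi> t \<le> m\<close>[of "min e (1/2) / 2"]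
    by linarith
qed

lemma P_max_set_open:
  assumes le_m: "\<And>x. x \<in> \<Omega> \<Longrightarrow> P x \<le> m"
  shows "open {x \<in> \<Omega>. P x = m}"
proof (unfold open_contains_ball, intro ballI)
  fix xs assume xs: "xs \<in> {x \<in> \<Omega>. P x = m}"
  obtain \<rho> where \<rho>: "\<rho> > 0" "cball xs \<rho> \<subseteq> \<Omega>"
    using xs open_\<Omega> open_contains_cball by blast
  show "\<exists>e>0. ball xs e \<subseteq> {x \<in> \<Omega>. P x = m}"
  proof (rule ccontr)
    assume "\<not> (\<exists>e>0. ball xs e \<subseteq> {x \<in> \<Omega>. P x = m})"
    then obtain z where z: "z \<in> ball xs (\<rho>/2)" "z \<notin> {x \<in> \<Omega>. P x = m}"
      using \<rho>(1) by (meson half_gt_zero subsetI)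
    have cball_z: "cball z (\<rho>/2) \<subseteq> \<Omega>"
    proof
      fix y assume "y \<in> cball z (\<rho>/2)"
      then have "dist xs y \<le> \<rho>" using z(1) dist_triangle[of xs y z] by simp
      then show "y \<in> \<Omega>" using \<rho>(2) by auto
    qed
    then have "z \<in> \<Omega>" using \<rho>(1) by auto
    then have "P z < m" using z(2) le_m[of z] by auto
    define T where "T = {y \<in> cball z (\<rho>/2). P y = m}"
    have "closed T"
      unfolding T_def using continuous_on_subset[OF P_continuous] cball_z closure_subset
      by (intro continuous_closed_preimage_constant) (auto intro: order_trans)
    moreover have "xs \<in> T" using xs z(1) by (auto simp: T_def dist_commute)
    ultimately obtain x1 where x1: "x1 \<in> T" "\<And>y. y \<in> T \<Longrightarrow> dist z x1 \<le> dist z y"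
      using distance_attains_inf by blast
    define R where "R = dist z x1"
    have "R > 0" using x1(1) \<open>P z < m\<close> by (auto simp: R_def T_def)
    have "R \<le> \<rho>/2" using x1(1) by (simp add: R_def T_def)
    have "P y < m" if "y \<in> ball z R" for y
    proof -
      have "y \<in> cball z (\<rho>/2)" using that \<open>R \<le> \<rho>/2\<close> by auto
      moreover have "y \<notin> T" using x1(2)[of y] that by (auto simp: R_def)
      ultimately show ?thesis using le_m[of y] cball_z by (force simp: T_def)
    qed
    then have "P x1 < m"
      using P_hopf[OF \<open>R > 0\<close> _ le_m] cball_z \<open>R \<le> \<rho>/2\<close> by (force simp: R_def)
    then show False using x1(1) by (simp add: T_def)
  qed
qed

lemma P_strong_max_principle:
  assumes conn: "connected \<Omega>" and le_m: "\<And>x. x \<in> \<Omega> \<Longrightarrow> P x \<le> m"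
    and x0: "x0 \<in> \<Omega>" "P x0 = m" and x: "x \<in> \<Omega>"
  shows "P x = m"
proof -
  have "open {x \<in> \<Omega>. P x < m}"
    using continuous_open_preimage[OF continuous_on_subset[OF P_continuous closure_subset] open_\<Omega>
        open_lessThan, of m]
    by (simp add: Int_def vimage_def conj_commute)
  then have "{x \<in> \<Omega>. P x = m} \<inter> \<Omega> = {} \<or> {x \<in> \<Omega>. P x < m} \<inter> \<Omega> = {}"
    using le_m by (intro connectedD[OF conn P_max_set_open[OF le_m]]) force+
  then show ?thesis using x0 x le_m[OF x] by force
qed

section \<open>Rigidity\<close>

lemma F_continuous: "continuous_on \<Omega> F"
  unfolding F_def
  by (intro continuous_on_diff continuous_on_mult continuous_on_const continuous_on_sum continuous_on_power)
     (use hess_cont in auto)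

lemma F_eq_0_if_P_constant:
  assumes const: "\<And>x. x \<in> \<Omega> \<Longrightarrow> P x = m" and x1: "x1 \<in> \<Omega>"
  shows "F x1 = 0"
  \<comment> \<open>otherwise \<open>P\<close> is strictly subharmonic near \<open>x1\<close>, which the concave barrier \<open>\<kappa> |y - x1|\<^sup>2\<close> detects\<close>
proof (rule ccontr)
  assume "F x1 \<noteq> 0"
  with F_nonneg[OF x1] have F_pos: "F x1 > 0" by simp
  obtain d1 where d1: "d1 > 0" "\<And>y. y \<in> \<Omega> \<Longrightarrow> dist y x1 < d1 \<Longrightarrow> dist (F y) (F x1) < F x1 / 2"
    using F_continuous x1 F_pos unfolding continuous_on_iff by (metis half_gt_zero)
  obtain d2 where d2: "d2 > 0" "ball x1 d2 \<subseteq> \<Omega>" using open_\<Omega> x1 open_contains_ball by blast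
  define \<rho> where "\<rho> = min d1 d2 / 2"
  have \<rho>: "\<rho> > 0" "\<rho> < d1" "\<rho> < d2" using d1 d2 by (auto simp: \<rho>_def)
  have clA: "closure (ball x1 \<rho>) \<subseteq> \<Omega>" using \<rho> d2(2) by auto
  define \<kappa> where "\<kappa> = - F x1 / (8 * real CARD('n))"
  have "P x1 + \<kappa> * ((x1 - x1) \<bullet> (x1 - x1)) \<le> m + \<kappa> * \<rho>\<^sup>2"
  proof (rule max_principle_P_plus_quadratic[OF open_ball clA, of "F x1 / 4"])
    fix y assume y: "y \<in> ball x1 \<rho>"
    then have "y \<in> \<Omega>" "dist y x1 < d1" using clA \<rho> by (auto simp: dist_commute)
    then have "\<bar>F y - F x1\<bar> < F x1 / 2" using d1(2) by (simp add: dist_real_def)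
    then have "F y > F x1 / 2" by arith
    then show "F x1 / 4 \<le> F y + 2 * \<kappa> * real CARD('n)" by (simp add: \<kappa>_def)
  next
    fix z assume "z \<in> frontier (ball x1 \<rho>)"
    then have "dist x1 z = \<rho>" "z \<in> \<Omega>" using \<rho> clA by (auto simp: frontier_ball)
    then show "P z + \<kappa> * ((z - x1) \<bullet> (z - x1)) \<le> m + \<kappa> * \<rho>\<^sup>2"
      using const by (simp add: dist_norm power2_norm_eq_inner[symmetric] norm_minus_commute)
  qed (use F_pos \<rho> in auto)
  moreover have "\<kappa> * \<rho>\<^sup>2 < 0" using F_pos \<rho> by (simp add: \<kappa>_def mult_neg_pos)
  ultimately show False using const[OF x1] by simp
qed

lemma hessian_eq_neg_id_if_F_eq_0:
  assumes x: "x \<in> \<Omega>" and F0: "F x = 0"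
  shows "D2u x v = - v"
proof -
  define a where "a j k = D2u x (axis j 1) $ k" for j k
  have indicator_sq: "(if j = k then 1 else 0 :: real)\<^sup>2 = (if j = k then 1 else 0)" for j k :: 'n
    by simp
  have "(\<Sum>j\<in>UNIV. \<Sum>k\<in>UNIV. (a j k + (if j = k then 1 else 0))\<^sup>2)
      = (\<Sum>j\<in>UNIV. \<Sum>k\<in>UNIV. (a j k)\<^sup>2) + 2 * (\<Sum>j\<in>UNIV. a j j) + real CARD('n)"
    by (simp add: power2_sum sum.distrib sum_distrib_left of_bool_def if_distrib[of "\<lambda>t. t * _"]
        if_distrib[of "\<lambda>t. _ * t"] sum.If_cases indicator_sq)
  also have "\<dots> = 0" using F0 pde x by (simp add: F_def a_def)
  finally have sq0: "(a j k + (if j = k then 1 else 0))\<^sup>2 = 0" for j k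
    by (simp add: sum_nonneg_eq_0_iff sum_nonneg)
  have col: "D2u x (axis j 1) = - axis j 1" for j
    unfolding vec_eq_iff
  proof
    fix k show "D2u x (axis j 1) $ k = (- axis j 1 :: real^'n) $ k"
      using sq0[of j k] by (auto simp: a_def axis_def)
  qed
  have lin: "linear (D2u x)" using hess x has_derivative_linear by blast
  have "D2u x v = D2u x (\<Sum>j\<in>UNIV. (v $ j) *s axis j 1)" by (simp add: basis_expansion)
  also have "\<dots> = (\<Sum>j\<in>UNIV. (v $ j) *\<^sub>R D2u x (axis j 1))"
    by (simp add: linear_sum[OF lin] linear_scale[OF lin] scalar_mult_eq_scaleR)
  also have "\<dots> = - (\<Sum>j\<in>UNIV. (v $ j) *s axis j 1)"
    by (simp add: col sum_negf scalar_mult_eq_scaleR)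
  finally show ?thesis by (simp add: basis_expansion)
qed

lemma gradient_affine_if_P_constant:
  assumes conn: "connected \<Omega>" and const: "\<And>x. x \<in> \<Omega> \<Longrightarrow> P x = m"
  obtains c where "\<And>x. x \<in> \<Omega> \<Longrightarrow> Du x = c - x"
proof -
  have "(\<lambda>x. Du x + x) constant_on \<Omega>"
  proof (rule has_derivative_zero_connected_constant_on[OF conn open_\<Omega> finite.emptyI])
    show "continuous_on \<Omega> (\<lambda>x. Du x + x)"
      using continuous_on_subset[OF Du_cont closure_subset] by (intro continuous_intros)
    show "\<forall>x\<in>\<Omega> - {}. ((\<lambda>x. Du x + x) has_derivative (\<lambda>h. 0)) (at x within \<Omega>)"
    proof
      fix x assume x: "x \<in> \<Omega> - {}"
      have "((\<lambda>x. Du x + x) has_derivative (\<lambda>h. D2u x h + h)) (at x)"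
        using hess x by (auto intro: has_derivative_add has_derivative_ident)
      moreover have "(\<lambda>h. D2u x h + h) = (\<lambda>h. 0)"
        using hessian_eq_neg_id_if_F_eq_0 F_eq_0_if_P_constant[OF const] x by auto
      ultimately show "((\<lambda>x. Du x + x) has_derivative (\<lambda>h. 0)) (at x within \<Omega>)"
        by (simp add: has_derivative_at_withinI)
    qed
  qed
  then show ?thesis
    using that unfolding constant_on_def by (metis add_diff_cancel)
qed

lemma paraboloid_if_P_constant:
  assumes conn: "connected \<Omega>" and const: "\<And>x. x \<in> \<Omega> \<Longrightarrow> P x = m"
  obtains c C where "\<And>x. x \<in> \<Omega> \<Longrightarrow> u x = C - ((x - c) \<bullet> (x - c)) / 2"
proof -
  obtain c where c: "\<And>x. x \<in> \<Omega> \<Longrightarrow> Du x = c - x"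
    using gradient_affine_if_P_constant[OF conn const] by blast
  have "(\<lambda>x. u x + ((x - c) \<bullet> (x - c)) / 2) constant_on \<Omega>"
  proof (rule has_derivative_zero_connected_constant_on[OF conn open_\<Omega> finite.emptyI])
    show "continuous_on \<Omega> (\<lambda>x. u x + ((x - c) \<bullet> (x - c)) / 2)"
      using continuous_on_subset[OF u_cont closure_subset] by (intro continuous_intros) auto
    show "\<forall>x\<in>\<Omega> - {}. ((\<lambda>x. u x + ((x - c) \<bullet> (x - c)) / 2) has_derivative (\<lambda>h. 0)) (at x within \<Omega>)"
    proof
      fix x assume x: "x \<in> \<Omega> - {}"
      have u': "(u has_derivative (\<lambda>h. (c - x) \<bullet> h)) (at x)" using grad c x by auto
      have "((\<lambda>x. u x + ((x - c) \<bullet> (x - c)) / 2) has_derivative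
          (\<lambda>h. (c - x) \<bullet> h + ((x - c) \<bullet> h + h \<bullet> (x - c)) / 2)) (at x)"
        by (rule derivative_eq_intros u' refl | simp)+
      moreover have "(\<lambda>h. (c - x) \<bullet> h + ((x - c) \<bullet> h + h \<bullet> (x - c)) / 2) = (\<lambda>h. 0)"
        by (auto simp: inner_commute inner_diff_left inner_diff_right field_simps)
      ultimately show "((\<lambda>x. u x + ((x - c) \<bullet> (x - c)) / 2) has_derivative (\<lambda>h. 0)) (at x within \<Omega>)"
        by (simp add: has_derivative_at_withinI)
    qed
  qed
  then obtain C where "\<And>x. x \<in> \<Omega> \<Longrightarrow> u x + ((x - c) \<bullet> (x - c)) / 2 = C"
    unfolding constant_on_def by blast
  then show ?thesis using that[of C c] by (simp add: algebra_simps)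
qed

lemma u_no_interior_min:
  assumes x: "x \<in> \<Omega>" and min: "\<And>y. y \<in> \<Omega> \<Longrightarrow> u x \<le> u y"
  shows False
proof -
  obtain \<rho> where \<rho>: "\<rho> > 0" "ball x \<rho> \<subseteq> \<Omega>" using open_\<Omega> x open_contains_ball by blast
  have line: "x + t *\<^sub>R axis k 1 \<in> \<Omega>" if "\<bar>t\<bar> < \<rho>" for t k
    using \<rho>(2) that by (auto simp: dist_norm)
  have "D2u x (axis k 1) $ k \<ge> 0" for k
  proof (rule DERIV_local_min_second_nonneg[OF \<rho>(1)])
    fix t :: real assume t: "\<bar>t\<bar> < \<rho>"
    show "((\<lambda>t. u (x + t *\<^sub>R axis k 1)) has_real_derivative Du (x + t *\<^sub>R axis k 1) $ k) (at t)"
      by (rule u_has_derivative_along_axis[OF line[OF t]])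
    show "u (x + 0 *\<^sub>R axis k 1) \<le> u (x + t *\<^sub>R axis k 1)" using min[OF line[OF t]] by simp
  next
    show "((\<lambda>t. Du (x + t *\<^sub>R axis k 1) $ k) has_real_derivative D2u x (axis k 1) $ k) (at 0)"
      using Du_has_derivative_along_axis[of x 0 k k] x by simp
  qed
  then have "(\<Sum>k\<in>UNIV. D2u x (axis k 1) $ k) \<ge> 0" by (simp add: sum_nonneg)
  then show False using pde x by simp
qed

lemma u_pos:
  assumes boundary: "\<And>z. z \<in> frontier \<Omega> \<Longrightarrow> u z = 0" and x: "x \<in> \<Omega>"
  shows "u x > 0"
proof -
  have "compact (closure \<Omega>)" using bounded_\<Omega> by (simp add: compact_closure)
  then obtain x2 where x2: "x2 \<in> closure \<Omega>" "\<And>y. y \<in> closure \<Omega> \<Longrightarrow> u x2 \<le> u y"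
    using continuous_attains_inf[OF _ _ u_cont] x closure_subset by blast
  then have "x2 \<notin> \<Omega>" using u_no_interior_min[of x2] closure_subset by blast
  then have "u x2 = 0" using x2(1) boundary closure_Un_frontier by blast
  then have nonneg: "u y \<ge> 0" if "y \<in> \<Omega>" for y using x2(2) that closure_subset by force
  show ?thesis
  proof (rule ccontr)
    assume "\<not> u x > 0"
    then show False using u_no_interior_min[OF x] nonneg[OF x] nonneg by force
  qed
qed

end

section \<open>The boundary gradient estimate\<close>

locale torsion_domain = torsion +
  assumes connected_\<Omega>: "connected \<Omega>" and nonempty_\<Omega>: "\<Omega> \<noteq> {}"
    and boundary_zero: "\<And>z. z \<in> frontier \<Omega> \<Longrightarrow> u z = 0"
begin

definition umax :: real where
  "umax = (SUP y\<in>closure \<Omega>. u y)"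

definition gradmax :: real where
  "gradmax = (SUP z\<in>frontier \<Omega>. norm (Du z))"

lemma frontier_nonempty: "frontier \<Omega> \<noteq> {}"
  using frontier_not_empty[OF nonempty_\<Omega>] bounded_\<Omega> not_bounded_UNIV by blast

lemma umax_attained:
  obtains x0 where "x0 \<in> \<Omega>" "u x0 = umax" "\<And>y. y \<in> closure \<Omega> \<Longrightarrow> u y \<le> umax"
proof -
  obtain x0 where x0: "x0 \<in> closure \<Omega>" "\<And>y. y \<in> closure \<Omega> \<Longrightarrow> u y \<le> u x0"
    using continuous_attains_sup[OF compact_closure[THEN iffD2, OF bounded_\<Omega>] _ u_cont] nonempty_\<Omega>
    by blast
  have "umax = u x0" unfolding umax_def by (rule cSup_eq_maximum) (use x0 in auto)
  obtain x where "x \<in> \<Omega>" using nonempty_\<Omega> by blast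
  then have "u x0 > 0" using u_pos[OF boundary_zero] x0(2) closure_subset by force
  then have "x0 \<in> \<Omega>" using x0(1) boundary_zero closure_Un_frontier by force
  with x0 \<open>umax = u x0\<close> show ?thesis using that by auto
qed

lemma umax_pos: "umax > 0"
  using umax_attained u_pos[OF boundary_zero] by metis

lemma norm_Du_le_gradmax:
  assumes "z \<in> frontier \<Omega>"
  shows "norm (Du z) \<le> gradmax"
proof -
  have "bdd_above ((\<lambda>z. norm (Du z)) ` frontier \<Omega>)"
    using continuous_on_subset[OF Du_cont, of "frontier \<Omega>"] compact_frontier_bounded[OF bounded_\<Omega>]
    by (intro bounded_imp_bdd_above compact_imp_bounded compact_continuous_image continuous_intros)
       (auto simp: frontier_def)
  then show ?thesis unfolding gradmax_def using assms by (rule cSUP_upper2) simp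
qed

lemma gradmax_attained:
  obtains zs where "zs \<in> frontier \<Omega>" "norm (Du zs) = gradmax"
proof -
  have "continuous_on (frontier \<Omega>) (\<lambda>z. norm (Du z))"
    using continuous_on_subset[OF Du_cont, of "frontier \<Omega>"] by (intro continuous_intros) (auto simp: frontier_def)
  then obtain zs where zs: "zs \<in> frontier \<Omega>" "\<And>z. z \<in> frontier \<Omega> \<Longrightarrow> norm (Du z) \<le> norm (Du zs)"
    using continuous_attains_sup[OF compact_frontier_bounded[OF bounded_\<Omega>] frontier_nonempty] by blast
  have "gradmax = norm (Du zs)" unfolding gradmax_def by (rule cSup_eq_maximum) (use zs in auto)
  with zs show ?thesis using that by auto
qed

lemma P_le_gradmax_sq:
  assumes "x \<in> \<Omega>"
  shows "P x \<le> gradmax\<^sup>2"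
proof (rule P_max_principle[OF _ assms])
  fix z assume z: "z \<in> frontier \<Omega>"
  then show "P z \<le> gradmax\<^sup>2"
    using boundary_zero[OF z] norm_Du_le_gradmax[OF z]
    by (simp add: P_def power2_norm_eq_inner[symmetric] power_mono)
qed

lemma sqrt_two_umax_le_gradmax: "sqrt (2 * umax) \<le> gradmax"
proof -
  obtain x0 where x0: "x0 \<in> \<Omega>" "u x0 = umax" using umax_attained by metis
  have "2 * umax \<le> P x0" using x0(2) by (simp add: P_def)
  also have "\<dots> \<le> gradmax\<^sup>2" by (rule P_le_gradmax_sq[OF x0(1)])
  finally show ?thesis using gradmax_attained by (metis norm_ge_zero real_le_lsqrt)
qed

lemma equivalent_pair_if_gradmax_eq:
  assumes eq: "gradmax = sqrt (2 * umax)"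
  shows "equivalent_pair \<Omega> u (ball 0 1) u0"
proof -
  obtain x0 where x0: "x0 \<in> \<Omega>" "u x0 = umax" using umax_attained by metis
  have le: "P x \<le> 2 * umax" if "x \<in> \<Omega>" for x
    using P_le_gradmax_sq[OF that] eq umax_pos by simp
  have "P x0 = 2 * umax" using le[OF x0(1)] x0(2) inner_ge_zero[of "Du x0"] by (simp add: P_def)
  then have "P x = 2 * umax" if "x \<in> \<Omega>" for x
    using P_strong_max_principle[OF connected_\<Omega> le x0(1) _ that] by simp
  then obtain c C where form: "\<And>x. x \<in> \<Omega> \<Longrightarrow> u x = C - ((x - c) \<bullet> (x - c)) / 2"
    using paraboloid_if_P_constant[OF connected_\<Omega>] by metis
  have form_closure: "u z + ((z - c) \<bullet> (z - c)) / 2 = C" if "z \<in> closure \<Omega>" for z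
  proof (rule continuous_constant_on_closure[OF _ _ that])
    show "continuous_on (closure \<Omega>) (\<lambda>z. u z + ((z - c) \<bullet> (z - c)) / 2)"
      using u_cont by (intro continuous_intros) auto
  qed (use form in simp)
  define R where "R = sqrt (2 * C)"
  have "C > 0" using form[OF x0(1)] x0(2) umax_pos inner_ge_zero[of "x0 - c"] by linarith
  then have R: "R > 0" "R\<^sup>2 = 2 * C" by (simp_all add: R_def)
  have "frontier \<Omega> \<subseteq> sphere c R"
  proof
    fix z assume z: "z \<in> frontier \<Omega>"
    then have "(z - c) \<bullet> (z - c) = R\<^sup>2"
      using form_closure[of z] boundary_zero[OF z] R(2) by (simp add: frontier_def)
    then have "(dist c z)\<^sup>2 = R\<^sup>2"
      by (metis dist_commute dist_norm power2_norm_eq_inner)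
    then show "z \<in> sphere c R" using R(1) by (simp add: power2_eq_iff_nonneg)
  qed
  then have "\<Omega> = ball c R"
    using ball_eq_if_frontier_subset_sphere open_\<Omega> bounded_\<Omega> nonempty_\<Omega> by blast
  moreover have "u y = R\<^sup>2 * u0 ((1 / R) *\<^sub>R (y - c))" if "y \<in> \<Omega>" for y
    using form[OF that] rescaled_u0[OF R(1), of y c] R(2) by simp
  ultimately show ?thesis
    unfolding equivalent_pair_def using R(1) affine_image_unit_ball[OF R(1)] by metis
qed

lemma gradmax_eq_if_equivalent_pair:
  assumes "equivalent_pair \<Omega> u (ball 0 1) u0"
  shows "gradmax = sqrt (2 * umax)"
proof -
  obtain l c where l: "l > 0" "\<Omega> = ball c l"
    and form: "\<And>y. y \<in> \<Omega> \<Longrightarrow> u y = (l\<^sup>2 - (y - c) \<bullet> (y - c)) / 2"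
  proof -
    from assms obtain l c where l: "l > 0" "\<Omega> = (\<lambda>x. l *\<^sub>R x + c) ` ball 0 1"
      and scaled: "\<And>y. y \<in> \<Omega> \<Longrightarrow> u y = l\<^sup>2 * u0 ((1 / l) *\<^sub>R (y - c))"
      unfolding equivalent_pair_def by blast
    show ?thesis
    proof (rule that[of l c])
      show "l > 0" "\<Omega> = ball c l" using l affine_image_unit_ball[OF l(1)] by simp_all
      show "u y = (l\<^sup>2 - (y - c) \<bullet> (y - c)) / 2" if "y \<in> \<Omega>" for y
        using scaled[OF that] rescaled_u0[OF l(1), of y c] by simp
    qed
  qed
  obtain x0 where x0: "x0 \<in> \<Omega>" "u x0 = umax" "\<And>y. y \<in> closure \<Omega> \<Longrightarrow> u y \<le> umax"
    using umax_attained by blast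
  have "c \<in> \<Omega>" using l by simp
  then have "l\<^sup>2 / 2 \<le> umax" using x0(3)[of c] form[of c] closure_subset by auto
  moreover have "umax \<le> l\<^sup>2 / 2" using x0(2) form[OF x0(1)] inner_ge_zero[of "x0 - c"] by argo
  ultimately have "2 * umax = l\<^sup>2" by simp
  have Du_eq: "Du x = c - x" if x: "x \<in> \<Omega>" for x
  proof -
    have "((\<lambda>y. (l\<^sup>2 - (y - c) \<bullet> (y - c)) / 2) has_derivative (\<lambda>h. (c - x) \<bullet> h)) (at x)"
      by (rule derivative_eq_intros refl ext | simp add: inner_commute inner_diff_left inner_diff_right field_simps)+
    then have "(u has_derivative (\<lambda>h. (c - x) \<bullet> h)) (at x)"
      by (rule has_derivative_transform_within_open[OF _ open_\<Omega> x]) (use form in auto)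
    from has_derivative_unique[OF grad[rule_format, OF x] this]
    have "Du x \<bullet> (Du x - (c - x)) = (c - x) \<bullet> (Du x - (c - x))" by meson
    then have "(Du x - (c - x)) \<bullet> (Du x - (c - x)) = 0" by (simp add: inner_diff_left)
    then show ?thesis by simp
  qed
  obtain zs where zs: "zs \<in> frontier \<Omega>" "norm (Du zs) = gradmax" using gradmax_attained by metis
  have "Du zs + zs = c"
  proof (rule continuous_constant_on_closure[where f = "\<lambda>x. Du x + x"])
    show "continuous_on (closure \<Omega>) (\<lambda>x. Du x + x)" using Du_cont by (intro continuous_intros)
    show "zs \<in> closure \<Omega>" using zs(1) by (simp add: frontier_def)
  qed (simp add: Du_eq)
  then have "Du zs = c - zs" by (simp add: algebra_simps)
  moreover have "dist c zs = l" using zs(1) l by simp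
  ultimately show ?thesis using zs(2) \<open>2 * umax = l\<^sup>2\<close> l(1) by (simp add: dist_norm)
qed

lemma SUP_ratio_eq: "(SUP z\<in>frontier \<Omega>. norm (Du z) / sqrt (2 * umax)) = gradmax / sqrt (2 * umax)"
proof -
  obtain zs where zs: "zs \<in> frontier \<Omega>" "norm (Du zs) = gradmax" using gradmax_attained by metis
  show ?thesis
  proof (rule cSup_eq_maximum)
    show "gradmax / sqrt (2 * umax) \<in> (\<lambda>z. norm (Du z) / sqrt (2 * umax)) ` frontier \<Omega>"
      by (rule image_eqI[of _ _ zs]) (simp_all add: zs)
  next
    fix r assume "r \<in> (\<lambda>z. norm (Du z) / sqrt (2 * umax)) ` frontier \<Omega>"
    then obtain z where "z \<in> frontier \<Omega>" "r = norm (Du z) / sqrt (2 * umax)" by blast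
    then show "r \<le> gradmax / sqrt (2 * umax)"
      using divide_right_mono[OF norm_Du_le_gradmax] umax_pos by simp
  qed
qed

end

theorem proposition3p1:
  fixes \<Omega> :: "(real^'n) set" and u :: "real^'n \<Rightarrow> real"
    and Du :: "real^'n \<Rightarrow> real^'n" and D2u :: "real^'n \<Rightarrow> real^'n \<Rightarrow> real^'n"
  assumes dim: "CARD('n) \<ge> 3"
    and dom: "bounded_domain \<Omega>"
    and smooth: "smooth_boundary \<Omega>"
    and grad: "\<forall>x\<in>\<Omega>. (u has_derivative (\<lambda>h. Du x \<bullet> h)) (at x)"
    and hess: "\<forall>x\<in>\<Omega>. (Du has_derivative D2u x) (at x)"
    and hess_cont: "\<forall>i j. continuous_on \<Omega> (\<lambda>x. D2u x (axis i 1) $ j)"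
    and pde: "\<forall>x\<in>\<Omega>. (\<Sum>i\<in>UNIV. D2u x (axis i 1) $ i) = - real CARD('n)"
    and u_cont: "continuous_on (closure \<Omega>) u"
    and Du_cont: "continuous_on (closure \<Omega>) Du"
    and bdry: "\<forall>x\<in>frontier \<Omega>. u x = 0"
  shows "(SUP x\<in>frontier \<Omega>. norm (Du x) / sqrt (2 * (SUP y\<in>closure \<Omega>. u y))) \<ge> 1
     \<and> ((SUP x\<in>frontier \<Omega>. norm (Du x) / sqrt (2 * (SUP y\<in>closure \<Omega>. u y))) = 1
          \<longleftrightarrow> equivalent_pair \<Omega> u (ball 0 1) u0)"
proof -
  interpret torsion_domain \<Omega> u Du D2u
    using dom grad hess hess_cont pde u_cont Du_cont bdry
    by unfold_locales (auto simp: bounded_domain_def)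
  have pos: "sqrt (2 * umax) > 0" using umax_pos by simp
  have "(SUP x\<in>frontier \<Omega>. norm (Du x) / sqrt (2 * (SUP y\<in>closure \<Omega>. u y)))
      = gradmax / sqrt (2 * umax)"
    using SUP_ratio_eq by (simp add: umax_def)
  moreover have "gradmax / sqrt (2 * umax) \<ge> 1"
    using sqrt_two_umax_le_gradmax pos by (simp add: le_divide_eq_1_pos)
  moreover have "gradmax / sqrt (2 * umax) = 1 \<longleftrightarrow> gradmax = sqrt (2 * umax)"
    using pos by (auto simp: divide_eq_1_iff)
  ultimately show ?thesis
    using equivalent_pair_if_gradmax_eq gradmax_eq_if_equivalent_pair by metis
qed

end
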